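(* In the setting below: (1) Suppose for $d=0,1$: $\mathrm{Cov}(W,\lambda_d(P)\mid D=d)=0$, $\mathrm{Cov}(WW',\lambda_d(P)\mid D=d)=0$ and $\mathrm{Cov}(W,\lambda_d(P)^2\mid D=d)=0$. Then $\widetilde{\mathrm{ATE}}-\mathrm{ATE}=(E[W]-E[W\mid D=1])'\eta_1\,E[\lambda_1(P)\mid D=1]-(E[W]-E[W\mid D=0])'\eta_0\,E[\lambda_0(P)\mid D=0]$, $\widetilde{\mathrm{CATE}}(w)-\mathrm{CATE}(w)=(w-E[W\mid D=1])'\eta_1\,E[\lambda_1(P)\mid D=1]-(w-E[W\mid D=0])'\eta_0\,E[\lambda_0(P)\mid D=0]$ for every $w\in\mathbb R^L$, and $\widetilde{\mathrm{Slope}}-\mathrm{Slope}=(E[W\mid D=1]-E[W\mid D=0])'\big(P(D=0)\eta_1+P(D=1)\eta_0\big)$. (2) If in addition $E[W\mid D=1]=E[W\mid D=0]$, then $\widetilde{\mathrm{ATE}}=\mathrm{ATE}$ and $\widetilde{\mathrm{Slope}}=\mathrm{Slope}$.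
   Context: Setting: random elements $(Y_0,Y_1,D,Z,W,U)$ with covariates $W\in\mathbb R^L$, $Y=(1-D)Y_0+DY_1$. Assume $U\mid W$ is uniform on $[0,1]$, $Z$ is independent of $U$ given $W$, $P=P(D=1\mid Z,W)\in(0,1)$ a.s., $D=\mathbb 1[U\le P]$, and $E[Y_d\mid Z,W,U]=E[Y_d\mid W,U]=\mu_d+W'\tau_d+\rho_d(W)h(U)$ with $\rho_d(w)=\rho_d+w'\eta_d$ (scalars $\mu_d,\rho_d$, vectors $\tau_d,\eta_d\in\mathbb R^L$), where $h$ is strictly increasing and continuous on $(0,1)$ with $\int_0^1h(u)du=0$. Define $\lambda_1(p)=\frac1p\int_0^ph(u)du$ and $\lambda_0(p)=\frac1{1-p}\int_p^1h(u)du$; under these assumptions $E[Y\mid D=d,W,P]=\mu_d+W'\tau_d+\rho_d\lambda_d(P)+W'\eta_d\lambda_d(P)$. The misspecified ("additively separable") coefficients $(\tilde\mu_d,\tilde\tau_d',\tilde\rho_d)'$ are the population least squares coefficients of $Y$ on $(1,W',\lambda_d(P))'$ in the subpopulation $D=d$, i.e. $E[RR'\mid D=d]^{-1}E[RY\mid D=d]$ with $R=(1,W',\lambda_d(P))'$. Assume all relevant second moments are finite, $\mathrm{Var}(W\mid D=d)$ is nonsingular, $\mathrm{Var}(\lambda_d(P)\mid D=d)>0$, and $0<P(D=1)<1$. Targets: $\mathrm{ATE}=\mu_1-\mu_0+E[W]'(\tau_1-\tau_0)$, $\mathrm{CATE}(w)=\mu_1-\mu_0+w'(\tau_1-\tau_0)$,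 $\mathrm{Slope}=E[\rho_1(W)-\rho_0(W)]$; estimands: $\widetilde{\mathrm{ATE}}=\tilde\mu_1-\tilde\mu_0+E[W]'(\tilde\tau_1-\tilde\tau_0)$, $\widetilde{\mathrm{CATE}}(w)=\tilde\mu_1-\tilde\mu_0+w'(\tilde\tau_1-\tilde\tau_0)$, $\widetilde{\mathrm{Slope}}=\tilde\rho_1-\tilde\rho_0$. *)

theory Defs
  imports "HOL-Probability.Probability"
begin

definition sigma_gen :: "'o measure \<Rightarrow> 'a measure \<Rightarrow> ('o \<Rightarrow> 'a) \<Rightarrow> 'o measure" where
  "sigma_gen M N X = vimage_algebra (space M) X N"

definition cond_indep :: "'o measure \<Rightarrow> 'o measure \<Rightarrow> ('o \<Rightarrow> 'a) \<Rightarrow> 'a measure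
    \<Rightarrow> ('o \<Rightarrow> 'b) \<Rightarrow> 'b measure \<Rightarrow> bool" where
  "cond_indep M F X MX V MV \<longleftrightarrow>
     (\<forall>A\<in>sets MX. \<forall>B\<in>sets MV. AE \<omega> in M.
        real_cond_exp M F (\<lambda>\<omega>. indicator (X -` A \<inter> space M) \<omega> * indicator (V -` B \<inter> space M) \<omega>) \<omega>
        = real_cond_exp M F (indicator (X -` A \<inter> space M)) \<omega>
          * real_cond_exp M F (indicator (V -` B \<inter> space M)) \<omega>)"

definition cexp :: "'o measure \<Rightarrow> 'o set \<Rightarrow> ('o \<Rightarrow> real) \<Rightarrow> real" where
  "cexp M A X = (\<integral>\<omega>. indicator A \<omega> * X \<omega> \<partial>M) / measure M A"

definition ccov :: "'o measure \<Rightarrow> 'o set \<Rightarrow> ('o \<Rightarrow> real) \<Rightarrow> ('o \<Rightarrow> real) \<Rightarrow> real" where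
  "ccov M A X V = cexp M A (\<lambda>\<omega>. X \<omega> * V \<omega>) - cexp M A X * cexp M A V"

definition evec :: "'o measure \<Rightarrow> ('o \<Rightarrow> real^'l) \<Rightarrow> real^'l" where
  "evec M W = (\<chi> i. \<integral>\<omega>. W \<omega> $ i \<partial>M)"

definition cvec :: "'o measure \<Rightarrow> 'o set \<Rightarrow> ('o \<Rightarrow> real^'l) \<Rightarrow> real^'l" where
  "cvec M A W = (\<chi> i. cexp M A (\<lambda>\<omega>. W \<omega> $ i))"

definition lam :: "(real \<Rightarrow> real) \<Rightarrow> nat \<Rightarrow> real \<Rightarrow> real" where
  "lam h d p = (if d = 1 then (1 / p) * (LBINT u=0..p. h u)
                else (1 / (1 - p)) * (LBINT u=p..1. h u))"

text \<open>Index type of the regressor vector R = (1, W', lambda_d(P))'.\<close>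
datatype 'l reg_idx = RConst | RCov 'l | RLam

lemma UNIV_reg_idx: "(UNIV :: 'l reg_idx set) = insert RConst (insert RLam (range RCov))"
  by (auto intro: reg_idx.exhaust)

instance reg_idx :: (finite) finite
  by standard (simp add: UNIV_reg_idx)

definition regr :: "('o \<Rightarrow> real^'l::finite) \<Rightarrow> ('o \<Rightarrow> real) \<Rightarrow> 'o \<Rightarrow> real^('l reg_idx)" where
  "regr W Lm \<omega> = (\<chi> i. case i of RConst \<Rightarrow> 1 | RCov l \<Rightarrow> W \<omega> $ l | RLam \<Rightarrow> Lm \<omega>)"

definition ls_coef :: "'o measure \<Rightarrow> 'o set \<Rightarrow> ('o \<Rightarrow> real^'l::finite) \<Rightarrow> ('o \<Rightarrow> real)
    \<Rightarrow> ('o \<Rightarrow> real) \<Rightarrow> real^('l reg_idx)" where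
  "ls_coef M A W Lm Y =
     matrix_inv (\<chi> i j. cexp M A (\<lambda>\<omega>. regr W Lm \<omega> $ i * regr W Lm \<omega> $ j))
       *v (\<chi> i. cexp M A (\<lambda>\<omega>. regr W Lm \<omega> $ i * Y \<omega>))"

definition ls_mu :: "real^('l::finite reg_idx) \<Rightarrow> real" where "ls_mu b = b $ RConst"
definition ls_tau :: "real^('l::finite reg_idx) \<Rightarrow> real^'l" where "ls_tau b = (\<chi> l. b $ RCov l)"
definition ls_rho :: "real^('l::finite reg_idx) \<Rightarrow> real" where "ls_rho b = b $ RLam"

end

theory Submission
  imports Defs
begin

text \<open>
Since \<open>U\<close> is uniform on \<open>[0,1]\<close> and independent of \<open>(Z, W)\<close>, integrating \<open>U\<close> out over the selection
region \<open>{U \<le> P}\<close> (resp. \<open>{U > P}\<close>) replaces \<open>h(U)\<close> by \<open>\<lambda>\<^sub>d(P)\<close>. On the event \<open>D = d\<close> the outcome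
therefore satisfies the moment conditions of the regression of \<open>Y\<close> on \<open>(1, W, \<lambda>\<^sub>d(P), W \<lambda>\<^sub>d(P))\<close>
with coefficients \<open>(\<mu>\<^sub>d, \<tau>\<^sub>d, \<rho>\<^sub>d, \<eta>\<^sub>d)\<close>. The misspecified regression omits the interaction \<open>W \<lambda>\<^sub>d(P)\<close>;
under the covariance restrictions every moment \<open>E[R W\<^sub>k \<lambda>\<^sub>d(P) | D = d]\<close> of the regressors
\<open>R = (1, W, \<lambda>\<^sub>d(P))\<close> factors through second moments, so the omitted term is absorbed exactly:
the least squares coefficients are \<open>(\<mu>\<^sub>d - E[W|D=d]'\<eta>\<^sub>d E[\<lambda>\<^sub>d(P)|D=d], \<tau>\<^sub>d + E[\<lambda>\<^sub>d(P)|D=d] \<eta>\<^sub>d,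
\<rho>\<^sub>d + E[W|D=d]'\<eta>\<^sub>d)\<close>. The bias formulas follow by linear algebra from
\<open>E[W] = P(D=1) E[W|D=1] + P(D=0) E[W|D=0]\<close>.
\<close>

section \<open>Measurability of the control functions\<close>

lemma cofinal_seqE:
  fixes I :: "real set"
  assumes "I \<noteq> {}"
  obtains r :: "nat \<Rightarrow> real"
  where "\<And>n. r n \<in> I" and "\<And>p. p \<in> I \<Longrightarrow> eventually (\<lambda>n. p \<le> r n) sequentially"
proof (cases "bdd_above I")
  case bdd: True
  show ?thesis
  proof (cases "Sup I \<in> I")
    case True
    then show ?thesis by (intro that[of "\<lambda>_. Sup I"]) (auto intro: cSup_upper[OF _ bdd])
  next
    case False
    have "\<forall>n. \<exists>x\<in>I. Sup I - inverse (real (Suc n)) < x"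
      using assms bdd by (subst less_cSup_iff[symmetric]) auto
    then obtain r where r: "\<And>n. r n \<in> I" "\<And>n. Sup I - inverse (real (Suc n)) < r n" by metis
    have lim: "(\<lambda>n. Sup I - inverse (real (Suc n))) \<longlonglongrightarrow> Sup I"
      using tendsto_diff[OF tendsto_const LIMSEQ_inverse_real_of_nat] by simp
    show ?thesis
    proof (rule that[OF r(1)])
      fix p assume "p \<in> I"
      with False cSup_upper[OF _ bdd] have "p < Sup I" by (metis order_le_less)
      from order_tendstoD(1)[OF lim this] show "eventually (\<lambda>n. p \<le> r n) sequentially"
        by eventually_elim (use r(2) in \<open>auto intro: less_imp_le less_trans\<close>)
    qed
  qed
next
  case False
  then have "\<forall>n. \<exists>x\<in>I. real n < x" by (meson bdd_above_def linorder_not_le)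
  then obtain r where r: "\<And>n. r n \<in> I" "\<And>n. real n < r n" by metis
  show ?thesis
  proof (rule that[OF r(1)])
    fix p
    obtain N :: nat where "p \<le> real N" using real_arch_simple by blast
    then have "p \<le> r n" if "N \<le> n" for n
      using r(2)[of n] of_nat_le_iff[of N n, where 'a=real] that by linarith
    then show "eventually (\<lambda>n. p \<le> r n) sequentially"
      unfolding eventually_sequentially by blast
  qed
qed

lemma integrable_indicator_mult_subset:
  fixes f :: "'a \<Rightarrow> real"
  assumes int: "integrable M (\<lambda>x. indicator A x * f x)"
    and B: "{x \<in> space M. x \<in> B} \<in> sets M" and "B \<subseteq> A"
  shows "integrable M (\<lambda>x. indicator B x * f x)"
proof -
  have eq: "indicator A x * f x * indicator {x \<in> space M. x \<in> B} x = indicator B x * f x"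
    if "x \<in> space M" for x
    using \<open>B \<subseteq> A\<close> that by (auto simp: indicator_def)
  show ?thesis
    by (rule Bochner_Integration.integrable_cong[OF refl, THEN iffD1,
          OF eq integrable_real_mult_indicator[OF B int]])
qed

text \<open>No measurability of \<open>f\<close> is assumed: the integrand \<open>h\<close> of \<open>lam\<close> is arbitrary outside \<open>(0,1)\<close>.\<close>

lemma (in sigma_finite_measure) borel_measurable_integral_indicator_mono:
  fixes f :: "'a \<Rightarrow> real" and A :: "real \<Rightarrow> 'a set"
  assumes mono: "mono A" and A[measurable]: "Measurable.pred (borel \<Otimes>\<^sub>M M) (\<lambda>(p, x). x \<in> A p)"
  shows "(\<lambda>p. \<integral>x. indicator (A p) x * f x \<partial>M) \<in> borel_measurable borel"
proof -
  have A_sets: "{x \<in> space M. x \<in> A p} \<in> sets M" for p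
    using measurable_compose[OF measurable_Pair1'[of p borel M] A] by (simp add: pred_def)
  define I where "I = {p. integrable M (\<lambda>x. indicator (A p) x * f x)}"
  have I_down: "q \<in> I" if "p \<in> I" "q \<le> p" for p q
    using integrable_indicator_mult_subset[OF that(1)[unfolded I_def mem_Collect_eq] A_sets
        monoD[OF mono that(2)]]
    unfolding I_def by simp
  show ?thesis
  proof (cases "I = {}")
    case True
    then show ?thesis unfolding I_def by (simp add: not_integrable_integral_eq)
  next
    case False
    obtain r where r_in: "\<And>n. r n \<in> I"
      and r_cofinal: "\<And>p. p \<in> I \<Longrightarrow> eventually (\<lambda>n. p \<le> r n) sequentially"
      using cofinal_seqE[OF False] by metis
    \<comment> \<open>Below \<open>r n\<close> the integral only sees the integrable function \<open>indicator (A (r n)) * f\<close>.\<close>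
    define G where "G n p = indicator {..r n} p * (\<integral>x. indicator (A p) x * (indicator (A (r n)) x * f x) \<partial>M)"
      for n p
    have "G n \<in> borel_measurable borel" for n
    proof -
      have [measurable]: "(\<lambda>x. indicator (A (r n)) x * f x) \<in> borel_measurable M"
        using r_in[of n] unfolding I_def by blast
      show ?thesis unfolding G_def by measurable
    qed
    moreover have "(\<lambda>n. G n p) \<longlonglongrightarrow> (\<integral>x. indicator (A p) x * f x \<partial>M)" for p
    proof (cases "p \<in> I")
      case True
      have "eventually (\<lambda>n. G n p = (\<integral>x. indicator (A p) x * f x \<partial>M)) sequentially"
        using r_cofinal[OF True]
      proof eventually_elim
        case (elim n)
        with monoD[OF mono]
        have "(\<lambda>x. indicator (A p) x * (indicator (A (r n)) x * f x)) = (\<lambda>x. indicator (A p) x * f x)"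
          by (auto simp: indicator_def fun_eq_iff)
        with elim show ?case by (simp add: G_def)
      qed
      then show ?thesis by (rule tendsto_eventually)
    next
      case False
      then have "G n p = 0" for n using I_down[OF r_in[of n]] by (auto simp: G_def indicator_def)
      with False show ?thesis by (simp add: I_def not_integrable_integral_eq)
    qed
    ultimately show ?thesis by (rule borel_measurable_LIMSEQ_real[rotated])
  qed
qed

lemma (in sigma_finite_measure) borel_measurable_integral_indicator_antimono:
  fixes f :: "'a \<Rightarrow> real" and A :: "real \<Rightarrow> 'a set"
  assumes "antimono A" and A[measurable]: "Measurable.pred (borel \<Otimes>\<^sub>M M) (\<lambda>(p, x). x \<in> A p)"
  shows "(\<lambda>p. \<integral>x. indicator (A p) x * f x \<partial>M) \<in> borel_measurable borel"
proof -
  have "mono (\<lambda>p. A (- p))"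
    using \<open>antimono A\<close> by (auto simp: mono_def antimono_def)
  moreover have "Measurable.pred (borel \<Otimes>\<^sub>M M) (\<lambda>(p, x). x \<in> A (- p))"
    using measurable_compose[OF _ A, of "\<lambda>(p, x). (- p, x)"] by (simp add: split_beta')
  ultimately have "(\<lambda>p. \<integral>x. indicator (A (- p)) x * f x \<partial>M) \<in> borel_measurable borel"
    by (rule borel_measurable_integral_indicator_mono)
  from measurable_compose[OF borel_measurable_uminus[OF measurable_ident_sets[OF refl]] this]
  show ?thesis by simp
qed

lemma interval_lebesgue_integral_eq_indicator:
  fixes f :: "real \<Rightarrow> real" and a b :: real
  shows "(LBINT u=a..b. f u) =
    (if a \<le> b then \<integral>u. indicator {a<..<b} u * f u \<partial>lborel else - (\<integral>u. indicator {b<..<a} u * f u \<partial>lborel))"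
proof -
  have "einterval (ereal x) (ereal y) = {x<..<y}" for x y by (auto simp: einterval_def)
  then show ?thesis by (simp add: interval_lebesgue_integral_def set_lebesgue_integral_def)
qed

lemma borel_measurable_interval_integral_upper:
  fixes f :: "real \<Rightarrow> real" and a :: real
  shows "(\<lambda>p::real. LBINT u=a..p. f u) \<in> borel_measurable borel"
proof -
  have "(\<lambda>p. \<integral>u. indicator {a<..<p} u * f u \<partial>lborel) \<in> borel_measurable borel"
    by (rule lborel.borel_measurable_integral_indicator_mono) (auto simp: mono_def)
  moreover have "(\<lambda>p. \<integral>u. indicator {p<..<a} u * f u \<partial>lborel) \<in> borel_measurable borel"
    by (rule lborel.borel_measurable_integral_indicator_antimono) (auto simp: antimono_def)
  ultimately show ?thesis unfolding interval_lebesgue_integral_eq_indicator by measurable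
qed

lemma borel_measurable_interval_integral_lower:
  fixes f :: "real \<Rightarrow> real" and b :: real
  shows "(\<lambda>p::real. LBINT u=p..b. f u) \<in> borel_measurable borel"
proof -
  have "(\<lambda>p. \<integral>u. indicator {p<..<b} u * f u \<partial>lborel) \<in> borel_measurable borel"
    by (rule lborel.borel_measurable_integral_indicator_antimono) (auto simp: antimono_def)
  moreover have "(\<lambda>p. \<integral>u. indicator {b<..<p} u * f u \<partial>lborel) \<in> borel_measurable borel"
    by (rule lborel.borel_measurable_integral_indicator_mono) (auto simp: mono_def)
  ultimately show ?thesis unfolding interval_lebesgue_integral_eq_indicator by measurable
qed

lemma borel_measurable_lam[measurable]: "lam h d \<in> borel_measurable borel"
proof -
  note [measurable] = borel_measurable_interval_integral_upper[where a=0 and f=h]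
    borel_measurable_interval_integral_lower[where b=1 and f=h]
  show ?thesis
    unfolding lam_def zero_ereal_def one_ereal_def by (cases "d = 1") (simp_all, measurable)
qed

section \<open>A uniform variable independent of a sigma algebra\<close>

lemma subalgebra_sigma_gen:
  assumes "X \<in> measurable M N"
  shows "subalgebra M (sigma_gen M N X)"
  unfolding subalgebra_def sigma_gen_def
  using sets_image_in_sets[of M "space M" X N] assms by simp

lemma measurable_sigma_gen:
  assumes "X \<in> measurable M N"
  shows "X \<in> measurable (sigma_gen M N X) N"
  unfolding sigma_gen_def using measurable_space[OF assms] by (intro measurable_vimage_algebra1) auto

lemma subalgebra_sigma_gen_comp:
  assumes X: "X \<in> measurable M N" and f: "f \<in> measurable N K"
  shows "subalgebra (sigma_gen M N X) (sigma_gen M K (\<lambda>\<omega>. f (X \<omega>)))"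
proof -
  have "(\<lambda>\<omega>. f (X \<omega>)) -` A \<inter> space M \<in> sets (sigma_gen M N X)" if "A \<in> sets K" for A
  proof -
    have eq: "(\<lambda>\<omega>. f (X \<omega>)) -` A \<inter> space M = X -` (f -` A \<inter> space N) \<inter> space M"
      using measurable_space[OF X] by auto
    show ?thesis
      unfolding sigma_gen_def eq by (rule in_vimage_algebra[OF measurable_sets[OF f that]])
  qed
  moreover have "(\<lambda>\<omega>. f (X \<omega>)) \<in> space M \<rightarrow> space K"
    using measurable_space[OF measurable_comp[OF X f]] by (auto simp: comp_def)
  ultimately show ?thesis
    by (auto simp: subalgebra_def sigma_gen_def sets_vimage_algebra2)
qed

lemma (in prob_space) finite_measure_subalgebra_sigma_gen:
  assumes "X \<in> measurable M N"
  shows "finite_measure_subalgebra M (sigma_gen M N X)"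
  by unfold_locales (rule subalgebra_sigma_gen[OF assms])

definition indep_uniform :: "'a measure \<Rightarrow> 'a measure \<Rightarrow> ('a \<Rightarrow> real) \<Rightarrow> bool" where
  "indep_uniform M F U \<longleftrightarrow> (\<forall>G\<in>sets F. \<forall>B\<in>sets borel.
     measure M (G \<inter> (U -` B \<inter> space M)) = measure M G * measure lborel (B \<inter> {0..1}))"

lemma (in prob_space) measure_rectangle_cond_indep_uniform:
  fixes Z :: "'a \<Rightarrow> 'z" and W :: "'a \<Rightarrow> 'w::topological_space" and U :: "'a \<Rightarrow> real"
  assumes [measurable]: "Z \<in> measurable M Mz" "W \<in> borel_measurable M" "U \<in> borel_measurable M"
    and U_unif: "\<forall>B\<in>sets borel. AE \<omega> in M.
       real_cond_exp M (sigma_gen M borel W) (indicator (U -` B \<inter> space M)) \<omega> = measure lborel (B \<inter> {0..1})"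
    and indep: "cond_indep M (sigma_gen M borel W) Z Mz U borel"
    and [measurable]: "A \<in> sets Mz" "C \<in> sets borel" "B \<in> sets borel"
  shows "measure M (Z -` A \<inter> space M \<inter> (W -` C \<inter> space M) \<inter> (U -` B \<inter> space M))
    = measure M (Z -` A \<inter> space M \<inter> (W -` C \<inter> space M)) * measure lborel (B \<inter> {0..1})"
proof -
  let ?FW = "sigma_gen M borel W"
  interpret FW: finite_measure_subalgebra M ?FW
    by (rule finite_measure_subalgebra_sigma_gen) simp
  define SA where "SA = Z -` A \<inter> space M"
  define SB where "SB = U -` B \<inter> space M"
  define SC where "SC = W -` C \<inter> space M"
  define c where "c = measure lborel (B \<inter> {0..1})"
  have [measurable]: "SA \<in> sets M" "SB \<in> sets M" "SC \<in> sets M"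
    unfolding SA_def SB_def SC_def by measurable
  have [measurable]: "indicator SC \<in> borel_measurable ?FW"
    unfolding SC_def sigma_gen_def by (intro borel_measurable_indicator in_vimage_algebra) simp
  have integrable_indicator: "integrable M (indicator X :: 'a \<Rightarrow> real)" if "X \<in> sets M" for X
    using that by (intro integrable_real_indicator) (simp_all add: less_top[symmetric])
  have cond: "AE \<omega> in M. real_cond_exp M ?FW (\<lambda>\<omega>. indicator SA \<omega> * indicator SB \<omega>) \<omega>
      = real_cond_exp M ?FW (indicator SA) \<omega> * c"
  proof -
    have "AE \<omega> in M. real_cond_exp M ?FW (\<lambda>\<omega>. indicator SA \<omega> * indicator SB \<omega>) \<omega>
        = real_cond_exp M ?FW (indicator SA) \<omega> * real_cond_exp M ?FW (indicator SB) \<omega>"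
      using indep unfolding cond_indep_def SA_def SB_def by simp
    moreover have "AE \<omega> in M. real_cond_exp M ?FW (indicator SB) \<omega> = c"
      using U_unif unfolding SB_def c_def by simp
    ultimately show ?thesis by eventually_elim simp
  qed
  have "measure M (SA \<inter> SC \<inter> SB) = (\<integral>\<omega>. indicator SC \<omega> * (indicator SA \<omega> * indicator SB \<omega>) \<partial>M)"
    by (simp add: indicator_inter_arith[symmetric] Int_ac SA_def)
  also have "\<dots> = (\<integral>\<omega>. indicator SC \<omega> * real_cond_exp M ?FW (\<lambda>\<omega>. indicator SA \<omega> * indicator SB \<omega>) \<omega> \<partial>M)"
    by (rule FW.real_cond_exp_intg(2)[symmetric])
       (simp_all add: indicator_inter_arith[symmetric] integrable_indicator)
  also have "\<dots> = (\<integral>\<omega>. indicator SC \<omega> * real_cond_exp M ?FW (indicator SA) \<omega> \<partial>M) * c"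
    using cond by (subst integral_mult_left_zero[symmetric], intro integral_cong_AE) auto
  also have "(\<integral>\<omega>. indicator SC \<omega> * real_cond_exp M ?FW (indicator SA) \<omega> \<partial>M) = measure M (SA \<inter> SC)"
    by (subst FW.real_cond_exp_intg(2))
       (simp_all add: indicator_inter_arith[symmetric] integrable_indicator Int_ac SA_def)
  finally show ?thesis unfolding SA_def SB_def SC_def c_def by (simp add: Int_ac)
qed

lemma (in prob_space) indep_uniform_sigma_gen_pair:
  fixes Z :: "'a \<Rightarrow> 'z" and W :: "'a \<Rightarrow> 'w::topological_space" and U :: "'a \<Rightarrow> real"
  assumes [measurable]: "Z \<in> measurable M Mz" "W \<in> borel_measurable M" "U \<in> borel_measurable M"
    and U_unif: "\<forall>B\<in>sets borel. AE \<omega> in M.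
       real_cond_exp M (sigma_gen M borel W) (indicator (U -` B \<inter> space M)) \<omega> = measure lborel (B \<inter> {0..1})"
    and indep: "cond_indep M (sigma_gen M borel W) Z Mz U borel"
  shows "indep_uniform M (sigma_gen M (Mz \<Otimes>\<^sub>M borel) (\<lambda>\<omega>. (Z \<omega>, W \<omega>))) U"
  unfolding indep_uniform_def
proof (intro ballI)
  let ?ZW = "\<lambda>\<omega>. (Z \<omega>, W \<omega>)"
  fix G B
  assume G: "G \<in> sets (sigma_gen M (Mz \<Otimes>\<^sub>M borel) ?ZW)" and [measurable]: "B \<in> sets (borel :: real measure)"
  have ZW[measurable]: "?ZW \<in> measurable M (Mz \<Otimes>\<^sub>M borel)" by measurable
  obtain S where [measurable]: "S \<in> sets (Mz \<Otimes>\<^sub>M borel)" and G_eq: "G = ?ZW -` S \<inter> space M"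
    using G measurable_space[OF ZW] unfolding sigma_gen_def by (auto simp: sets_vimage_algebra2)
  define SB where "SB = U -` B \<inter> space M"
  define c where "c = measure lborel (B \<inter> {0..1})"
  have [measurable]: "SB \<in> sets M" unfolding SB_def by measurable
  \<comment> \<open>Both sides of the claim are finite measures in \<open>S\<close>; they agree on rectangles.\<close>
  define \<mu>1 where "\<mu>1 = distr (density M (indicator SB)) (Mz \<Otimes>\<^sub>M borel) ?ZW"
  define \<mu>2 where "\<mu>2 = scale_measure (ennreal c) (distr M (Mz \<Otimes>\<^sub>M borel) ?ZW)"
  have \<mu>1: "emeasure \<mu>1 X = measure M (?ZW -` X \<inter> space M \<inter> SB)"
    if [measurable]: "X \<in> sets (Mz \<Otimes>\<^sub>M borel)" for X
    unfolding \<mu>1_def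
    by (subst emeasure_distr) (simp_all add: emeasure_restricted emeasure_eq_measure Int_ac)
  have \<mu>2: "emeasure \<mu>2 X = c * measure M (?ZW -` X \<inter> space M)"
    if [measurable]: "X \<in> sets (Mz \<Otimes>\<^sub>M borel)" for X
    unfolding \<mu>2_def by (simp add: emeasure_distr emeasure_eq_measure ennreal_mult'' c_def)
  let ?E = "{a \<times> b | a b. a \<in> sets Mz \<and> b \<in> sets (borel :: 'w measure)}"
  have "\<mu>1 = \<mu>2"
  proof (rule measure_eqI_generator_eq[OF Int_stable_pair_measure_generator[of Mz "borel :: 'w measure"]])
    show "?E \<subseteq> Pow (space Mz \<times> UNIV)" using sets.space_closed[of Mz] by auto
    show "sets \<mu>1 = sigma_sets (space Mz \<times> UNIV) ?E" "sets \<mu>2 = sigma_sets (space Mz \<times> UNIV) ?E"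
      unfolding \<mu>1_def \<mu>2_def by (simp_all add: sets_pair_measure)
    have "space Mz \<times> UNIV \<in> ?E"
      unfolding mem_Collect_eq by (intro exI[of _ "space Mz"] exI[of _ "UNIV :: 'w set"]) simp
    then show "range (\<lambda>_. space Mz \<times> UNIV) \<subseteq> ?E" by auto
    show "(\<Union>i::nat. space Mz \<times> UNIV) = space Mz \<times> (UNIV :: 'w set)" by simp
    show "emeasure \<mu>1 (space Mz \<times> UNIV) \<noteq> \<infinity>" for i :: nat
      using \<mu>1[of "space Mz \<times> UNIV"] by simp
  next
    fix X assume "X \<in> ?E"
    then obtain a b where X: "X = a \<times> b" and [measurable]: "a \<in> sets Mz" "b \<in> sets (borel :: 'w measure)"
      by auto
    have "?ZW -` X \<inter> space M = Z -` a \<inter> space M \<inter> (W -` b \<inter> space M)" using X by auto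
    with measure_rectangle_cond_indep_uniform[OF assms, of a b B]
    show "emeasure \<mu>1 X = emeasure \<mu>2 X" by (simp add: \<mu>1 \<mu>2 X SB_def c_def Int_ac)
  qed
  then have "measure M (?ZW -` S \<inter> space M \<inter> SB) = c * measure M (?ZW -` S \<inter> space M)"
    using \<mu>1[of S] \<mu>2[of S] by (simp add: c_def)
  then show "measure M (G \<inter> (U -` B \<inter> space M)) = measure M G * measure lborel (B \<inter> {0..1})"
    by (simp add: G_eq SB_def c_def mult.commute)
qed

abbreviation uniform01 :: "real measure" where
  "uniform01 \<equiv> uniform_measure lborel {0..1}"

lemma emeasure_uniform01:
  assumes "B \<in> sets borel"
  shows "emeasure uniform01 B = measure lborel (B \<inter> {0..1})"
proof -
  have "emeasure lborel ({0..1} \<inter> B) \<le> emeasure lborel {0..1::real}"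
    using assms by (intro emeasure_mono) auto
  then have "emeasure lborel ({0..1} \<inter> B) = measure lborel ({0..1} \<inter> B)"
    by (intro emeasure_eq_ennreal_measure) (auto simp: top_unique)
  with assms show ?thesis by (simp add: Int_commute divide_ennreal_def)
qed

lemma prob_space_uniform01: "prob_space uniform01"
  by (rule prob_space_uniform_measure) simp_all

lemma integral_uniform01:
  fixes f :: "real \<Rightarrow> real"
  assumes "f \<in> borel_measurable borel"
  shows "(\<integral>u. f u \<partial>uniform01) = (\<integral>u. indicator {0..1} u * f u \<partial>lborel)"
  using assms
  by (simp add: uniform_measure_def ennreal_indicator[symmetric] divide_ennreal_def integral_density)

lemma measurable_id_restr_to_subalg:
  assumes "subalgebra M F"
  shows "(\<lambda>x. x) \<in> measurable M (restr_to_subalg M F)"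
  using assms sets.sets_into_space unfolding measurable_def subalgebra_def
  by (auto simp: space_restr_to_subalg sets_restr_to_subalg[OF assms])

lemma (in prob_space) distr_indep_uniform:
  assumes sub: "subalgebra M F" and [measurable]: "U \<in> borel_measurable M" and indep: "indep_uniform M F U"
  shows "distr M (restr_to_subalg M F \<Otimes>\<^sub>M uniform01) (\<lambda>\<omega>. (\<omega>, U \<omega>)) = restr_to_subalg M F \<Otimes>\<^sub>M uniform01"
proof (rule sym, rule pair_measure_eqI)
  let ?R = "restr_to_subalg M F"
  show "sigma_finite_measure ?R"
    using finite_measure_restr_to_subalg[OF sub] finite_measure_axioms finite_measure_def by blast
  show "sigma_finite_measure uniform01"
    using prob_space_uniform01 by (simp add: prob_space_imp_sigma_finite)
  show "sets (?R \<Otimes>\<^sub>M uniform01) = sets (distr M (?R \<Otimes>\<^sub>M uniform01) (\<lambda>\<omega>. (\<omega>, U \<omega>)))"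
    by simp
  fix A B assume A: "A \<in> sets ?R" and B: "B \<in> sets uniform01"
  have AF: "A \<in> sets F" and AM: "A \<in> sets M"
    using A sub by (auto simp: sets_restr_to_subalg subalgebra_def)
  note [measurable] = measurable_id_restr_to_subalg[OF sub]
  have "(\<lambda>\<omega>. (\<omega>, U \<omega>)) -` (A \<times> B) \<inter> space M = A \<inter> (U -` B \<inter> space M)"
    using sets.sets_into_space[OF AM] by auto
  with A B show "emeasure ?R A * emeasure uniform01 B
      = emeasure (distr M (?R \<Otimes>\<^sub>M uniform01) (\<lambda>\<omega>. (\<omega>, U \<omega>))) (A \<times> B)"
    using indep AF by (simp add: emeasure_distr emeasure_restr_to_subalg[OF sub] emeasure_uniform01
        emeasure_eq_measure ennreal_mult'' indep_uniform_def del: emeasure_uniform_measure)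
qed

lemma (in prob_space) integral_indep_uniform:
  fixes \<phi> :: "'a \<times> real \<Rightarrow> real"
  assumes sub: "subalgebra M F" and [measurable]: "U \<in> borel_measurable M" and indep: "indep_uniform M F U"
    and \<phi>: "\<phi> \<in> borel_measurable (F \<Otimes>\<^sub>M uniform01)"
    and int: "integrable M (\<lambda>\<omega>. \<phi> (\<omega>, U \<omega>))"
  shows "(\<integral>\<omega>. \<phi> (\<omega>, U \<omega>) \<partial>M) = (\<integral>\<omega>. (\<integral>u. \<phi> (\<omega>, u) \<partial>uniform01) \<partial>M)"
    and "(\<lambda>\<omega>. \<integral>u. \<phi> (\<omega>, u) \<partial>uniform01) \<in> borel_measurable F"
proof -
  let ?R = "restr_to_subalg M F"
  interpret R: finite_measure ?R
    using finite_measure_restr_to_subalg[OF sub] finite_measure_axioms by blast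
  interpret U01: prob_space uniform01 by (rule prob_space_uniform01)
  interpret pair_sigma_finite ?R uniform01 ..
  have [measurable]: "\<phi> \<in> borel_measurable (?R \<Otimes>\<^sub>M uniform01)"
    using \<phi>
    by (simp add: measurable_cong_sets[OF sets_pair_measure_cong[OF sets_restr_to_subalg[OF sub] refl] refl])
  note [measurable] = measurable_id_restr_to_subalg[OF sub]
  have law: "distr M (?R \<Otimes>\<^sub>M uniform01) (\<lambda>\<omega>. (\<omega>, U \<omega>)) = ?R \<Otimes>\<^sub>M uniform01"
    by (rule distr_indep_uniform[OF sub _ indep]) simp
  have "(\<lambda>\<omega>. \<integral>u. \<phi> (\<omega>, u) \<partial>uniform01) \<in> borel_measurable ?R" by measurable
  then show inner: "(\<lambda>\<omega>. \<integral>u. \<phi> (\<omega>, u) \<partial>uniform01) \<in> borel_measurable F"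
    by (rule measurable_in_subalg'[OF sub])
  have "integrable (?R \<Otimes>\<^sub>M uniform01) \<phi>"
    using int integrable_distr_eq[of "\<lambda>\<omega>. (\<omega>, U \<omega>)" M "?R \<Otimes>\<^sub>M uniform01" \<phi>] law by simp
  have "(\<integral>\<omega>. \<phi> (\<omega>, U \<omega>) \<partial>M) = integral\<^sup>L (?R \<Otimes>\<^sub>M uniform01) \<phi>"
    using integral_distr[of "\<lambda>\<omega>. (\<omega>, U \<omega>)" M "?R \<Otimes>\<^sub>M uniform01" \<phi>] law by simp
  also have "\<dots> = (\<integral>\<omega>. (\<integral>u. \<phi> (\<omega>, u) \<partial>uniform01) \<partial>?R)"
    by (rule integral_fst'[symmetric]) fact
  also have "\<dots> = (\<integral>\<omega>. (\<integral>u. \<phi> (\<omega>, u) \<partial>uniform01) \<partial>M)"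
    by (rule integral_subalgebra2[OF sub inner])
  finally show "(\<integral>\<omega>. \<phi> (\<omega>, U \<omega>) \<partial>M) = (\<integral>\<omega>. (\<integral>u. \<phi> (\<omega>, u) \<partial>uniform01) \<partial>M)" .
qed

lemma (in prob_space) AE_indep_uniform_in_unit_interval:
  assumes sub: "subalgebra M F" and [measurable]: "U \<in> borel_measurable M" and indep: "indep_uniform M F U"
  shows "AE \<omega> in M. 0 < U \<omega> \<and> U \<omega> < 1"
proof (rule AE_I')
  have "space M \<in> sets F" using sub sets.top[of F] unfolding subalgebra_def by simp
  moreover have "- {0<..<1::real} \<in> sets borel" by measurable
  ultimately have "prob (space M \<inter> (U -` (- {0<..<1}) \<inter> space M))
      = prob (space M) * measure lborel (- {0<..<1} \<inter> {0..1::real})"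
    using indep unfolding indep_uniform_def by blast
  then have "prob (U -` (- {0<..<1}) \<inter> space M) = measure lborel (- {0<..<1} \<inter> {0..1::real})"
    by (simp add: Int_absorb1 prob_space)
  also have "- {0<..<1} \<inter> {0..1::real} = {0, 1}" by auto
  also have "measure lborel {0, 1::real} = 0" by (simp add: measure_def emeasure_lborel_countable)
  finally show "U -` (- {0<..<1}) \<inter> space M \<in> null_sets M"
    by (simp add: null_sets_def emeasure_eq_measure)
qed auto

section \<open>Selection on the uniform variable\<close>

text \<open>The values of \<open>U\<close> for which \<open>D = d\<close> when \<open>P = p\<close>; as in \<open>lam\<close>, every \<open>d \<noteq> 1\<close> acts as \<open>0\<close>.\<close>

definition selection_set :: "nat \<Rightarrow> real \<Rightarrow> real set" where
  "selection_set d p = (if d = 1 then {..p} else {p<..})"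

lemma pred_selection_set[measurable]:
  assumes [measurable]: "f \<in> borel_measurable M" "g \<in> borel_measurable M"
  shows "Measurable.pred M (\<lambda>x. f x \<in> selection_set d (g x))"
  unfolding selection_set_def by (cases "d = 1") simp_all

lemma borel_measurable_indicator_selection_set[measurable]:
  assumes [measurable]: "f \<in> borel_measurable M" "g \<in> borel_measurable M"
  shows "(\<lambda>x. indicator (selection_set d (g x)) (f x) :: real) \<in> borel_measurable M"
  unfolding indicator_def by measurable

lemma borel_measurable_restrict_unit_interval[measurable]:
  fixes h :: "real \<Rightarrow> real"
  assumes "continuous_on {0<..<1} h"
  shows "(\<lambda>u. indicator {0<..<1} u * h u) \<in> borel_measurable borel"
  using borel_measurable_continuous_on_indicator[OF _ assms] by simp

lemma integral_uniform01_selection_set: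
  fixes h :: "real \<Rightarrow> real"
  assumes p: "0 < p" "p < 1" and h: "continuous_on {0<..<1} h"
  shows "(\<integral>u. indicator (selection_set d p) u * (indicator {0<..<1} u * h u) \<partial>uniform01)
    = measure uniform01 (selection_set d p) * lam h d p"
proof -
  define h' where "h' u = indicator {0<..<1} u * h u" for u
  have [measurable]: "h' \<in> borel_measurable borel"
    unfolding h'_def[abs_def] by (rule borel_measurable_restrict_unit_interval[OF h])
  have Ioi_Int: "{p<..} \<inter> {0..1} = {p<..1}" using p by auto
  have "(\<integral>u. indicator (selection_set d p) u * h' u \<partial>uniform01)
      = (\<integral>u. indicator {0..1} u * (indicator (selection_set d p) u * h' u) \<partial>lborel)"
    by (rule integral_uniform01) measurable
  also have "\<dots> = (if d = 1 then \<integral>u. indicator {0<..<p} u * h u \<partial>lborel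
      else \<integral>u. indicator {p<..<1} u * h u \<partial>lborel)"
  proof (cases "d = 1")
    case True
    have "AE u in lborel. indicator {0..1} u * (indicator {..p} u * h' u) = indicator {0<..<p} u * h' u"
      using AE_lborel_singleton[of p] by eventually_elim (use p in \<open>auto simp: indicator_def h'_def\<close>)
    then have "(\<integral>u. indicator {0..1} u * (indicator {..p} u * h' u) \<partial>lborel)
        = (\<integral>u. indicator {0<..<p} u * h' u \<partial>lborel)"
      by (rule integral_cong_AE[rotated 2]) measurable
    also have "\<dots> = (\<integral>u. indicator {0<..<p} u * h u \<partial>lborel)"
      using p by (intro Bochner_Integration.integral_cong) (auto simp: indicator_def h'_def)
    finally show ?thesis using True by (simp add: selection_set_def)
  next
    case False
    have "indicator {0..1} u * (indicator {p<..} u * h' u) = indicator {p<..<1} u * h u" for u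
      using p by (auto simp: indicator_def h'_def)
    with False show ?thesis by (simp add: selection_set_def)
  qed
  also have "\<dots> = measure uniform01 (selection_set d p) * lam h d p"
    using p Ioi_Int
    by (simp add: selection_set_def lam_def interval_lebesgue_integral_eq_indicator zero_ereal_def
        one_ereal_def Int_commute Int_atLeastAtMost)
  finally show ?thesis by (simp add: h'_def)
qed

lemma (in prob_space) integral_selection_h_eq_lam:
  fixes U P K :: "'a \<Rightarrow> real" and h :: "real \<Rightarrow> real" and d :: nat
  defines "S \<equiv> {\<omega> \<in> space M. U \<omega> \<in> selection_set d (P \<omega>)}"
  assumes sub: "subalgebra M F" and [measurable]: "U \<in> borel_measurable M" and indep: "indep_uniform M F U"
    and [measurable]: "P \<in> borel_measurable F" "K \<in> borel_measurable F"
    and P_range: "AE \<omega> in M. 0 < P \<omega> \<and> P \<omega> < 1" and h: "continuous_on {0<..<1} h"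
    and int_h: "integrable M (\<lambda>\<omega>. indicator S \<omega> * (K \<omega> * (indicator {0<..<1} (U \<omega>) * h (U \<omega>))))"
    and int_lam: "integrable M (\<lambda>\<omega>. indicator S \<omega> * (K \<omega> * lam h d (P \<omega>)))"
  shows "(\<integral>\<omega>. indicator S \<omega> * (K \<omega> * (indicator {0<..<1} (U \<omega>) * h (U \<omega>))) \<partial>M)
    = (\<integral>\<omega>. indicator S \<omega> * (K \<omega> * lam h d (P \<omega>)) \<partial>M)"
proof -
  note [measurable] = borel_measurable_restrict_unit_interval[OF h]
  have [measurable]: "P \<in> borel_measurable M" "K \<in> borel_measurable M"
    by (simp_all add: measurable_from_subalg[OF sub])
  define \<phi>h where "\<phi>h x = indicator (selection_set d (P (fst x))) (snd x)
    * (K (fst x) * (indicator {0<..<1} (snd x) * h (snd x)))" for x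
  define \<phi>l where "\<phi>l x = indicator (selection_set d (P (fst x))) (snd x)
    * (K (fst x) * lam h d (P (fst x)))" for x
  have [measurable]: "\<phi>h \<in> borel_measurable (F \<Otimes>\<^sub>M uniform01)" "\<phi>l \<in> borel_measurable (F \<Otimes>\<^sub>M uniform01)"
    unfolding \<phi>h_def[abs_def] \<phi>l_def[abs_def] by measurable
  have h_eq: "indicator S \<omega> * (K \<omega> * (indicator {0<..<1} (U \<omega>) * h (U \<omega>))) = \<phi>h (\<omega>, U \<omega>)"
    and l_eq: "indicator S \<omega> * (K \<omega> * lam h d (P \<omega>)) = \<phi>l (\<omega>, U \<omega>)" if "\<omega> \<in> space M" for \<omega>
    using that by (simp_all add: S_def \<phi>h_def \<phi>l_def indicator_def)
  have int: "integrable M (\<lambda>\<omega>. \<phi>h (\<omega>, U \<omega>))" "integrable M (\<lambda>\<omega>. \<phi>l (\<omega>, U \<omega>))"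
    using int_h int_lam by (simp_all add: h_eq l_eq cong: Bochner_Integration.integrable_cong)
  note Fh = integral_indep_uniform[OF sub _ indep _ int(1)]
    and Fl = integral_indep_uniform[OF sub _ indep _ int(2)]
  have inner: "AE \<omega> in M. (\<integral>u. \<phi>h (\<omega>, u) \<partial>uniform01) = (\<integral>u. \<phi>l (\<omega>, u) \<partial>uniform01)"
    using P_range
  proof eventually_elim
    case (elim \<omega>)
    have "(\<integral>u. \<phi>h (\<omega>, u) \<partial>uniform01)
        = K \<omega> * (\<integral>u. indicator (selection_set d (P \<omega>)) u * (indicator {0<..<1} u * h u) \<partial>uniform01)"
      by (simp add: \<phi>h_def mult.left_commute[of _ "K \<omega>"])
    also have "\<dots> = K \<omega> * (measure uniform01 (selection_set d (P \<omega>)) * lam h d (P \<omega>))"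
      using integral_uniform01_selection_set[of "P \<omega>" h d] elim h by simp
    also have "\<dots> = (\<integral>u. \<phi>l (\<omega>, u) \<partial>uniform01)"
      by (simp add: \<phi>l_def)
    finally show ?case .
  qed
  have "(\<integral>\<omega>. indicator S \<omega> * (K \<omega> * (indicator {0<..<1} (U \<omega>) * h (U \<omega>))) \<partial>M)
      = (\<integral>\<omega>. (\<integral>u. \<phi>h (\<omega>, u) \<partial>uniform01) \<partial>M)"
    using Fh(1) by (simp add: h_eq cong: Bochner_Integration.integral_cong)
  also have "\<dots> = (\<integral>\<omega>. (\<integral>u. \<phi>l (\<omega>, u) \<partial>uniform01) \<partial>M)"
    using Fh(2) Fl(2) inner
    by (intro integral_cong_AE) (auto intro: measurable_from_subalg[OF sub])
  also have "\<dots> = (\<integral>\<omega>. indicator S \<omega> * (K \<omega> * lam h d (P \<omega>)) \<partial>M)"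
    using Fl(1) by (simp add: l_eq cong: Bochner_Integration.integral_cong)
  finally show ?thesis .
qed

lemma (in prob_space) integral_selection_outcome:
  fixes U P Y G a b :: "'a \<Rightarrow> real" and h :: "real \<Rightarrow> real" and d :: nat
  defines "S \<equiv> {\<omega> \<in> space M. U \<omega> \<in> selection_set d (P \<omega>)}"
  assumes sub: "subalgebra M F" and sub3: "subalgebra M F3" and F_F3: "subalgebra F3 F"
    and U_F3[measurable]: "U \<in> borel_measurable F3" and indep: "indep_uniform M F U"
    and [measurable]: "P \<in> borel_measurable F" "G \<in> borel_measurable F"
      "a \<in> borel_measurable F" "b \<in> borel_measurable F" and Y_M[measurable]: "Y \<in> borel_measurable M"
    and P_range: "AE \<omega> in M. 0 < P \<omega> \<and> P \<omega> < 1" and h: "continuous_on {0<..<1} h"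
    and cond_exp: "AE \<omega> in M. real_cond_exp M F3 Y \<omega> = a \<omega> + b \<omega> * h (U \<omega>)"
    and int_Y: "integrable M (\<lambda>\<omega>. indicator S \<omega> * G \<omega> * Y \<omega>)"
    and int_a: "integrable M (\<lambda>\<omega>. indicator S \<omega> * (G \<omega> * a \<omega>))"
    and int_b: "integrable M (\<lambda>\<omega>. indicator S \<omega> * (G \<omega> * b \<omega> * lam h d (P \<omega>)))"
  shows "(\<integral>\<omega>. indicator S \<omega> * G \<omega> * Y \<omega> \<partial>M)
    = (\<integral>\<omega>. indicator S \<omega> * (G \<omega> * a \<omega>) + indicator S \<omega> * (G \<omega> * b \<omega> * lam h d (P \<omega>)) \<partial>M)"
proof -
  interpret F3: finite_measure_subalgebra M F3 by unfold_locales (rule sub3)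
  have to_F3: "f \<in> borel_measurable F3" if "f \<in> borel_measurable F" for f :: "'a \<Rightarrow> real"
    by (rule measurable_from_subalg[OF F_F3 that])
  have [measurable]: "P \<in> borel_measurable F3" "G \<in> borel_measurable F3" "U \<in> borel_measurable M"
    "P \<in> borel_measurable M" "G \<in> borel_measurable M" "a \<in> borel_measurable M" "b \<in> borel_measurable M"
    by (simp_all add: to_F3 measurable_from_subalg[OF sub] measurable_from_subalg[OF sub3])
  note [measurable] = borel_measurable_restrict_unit_interval[OF h]
  define f where "f \<omega> = indicator S \<omega> * G \<omega>" for \<omega>
  have "S = {\<omega> \<in> space F3. U \<omega> \<in> selection_set d (P \<omega>)}"
    using sub3 by (simp add: S_def subalgebra_def)
  also have "\<dots> \<in> sets F3" by measurable
  finally have f_F3[measurable]: "f \<in> borel_measurable F3"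
    unfolding f_def by measurable
  have int_f: "integrable M (\<lambda>\<omega>. f \<omega> * Y \<omega>)" using int_Y by (simp add: f_def)
  have U_01: "AE \<omega> in M. 0 < U \<omega> \<and> U \<omega> < 1"
    by (rule AE_indep_uniform_in_unit_interval[OF sub _ indep]) simp
  have split: "AE \<omega> in M. f \<omega> * real_cond_exp M F3 Y \<omega>
      = indicator S \<omega> * (G \<omega> * a \<omega>) + indicator S \<omega> * (G \<omega> * b \<omega> * (indicator {0<..<1} (U \<omega>) * h (U \<omega>)))"
    using cond_exp U_01 by eventually_elim (simp add: f_def algebra_simps)
  have int_h: "integrable M (\<lambda>\<omega>. indicator S \<omega> * (G \<omega> * b \<omega> * (indicator {0<..<1} (U \<omega>) * h (U \<omega>))))"
  proof (rule integrable_cong_AE_imp[OF Bochner_Integration.integrable_diff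
        [OF F3.real_cond_exp_intg(1)[OF int_f f_F3 Y_M] int_a]])
    show "AE \<omega> in M. f \<omega> * real_cond_exp M F3 Y \<omega> - indicator S \<omega> * (G \<omega> * a \<omega>)
        = indicator S \<omega> * (G \<omega> * b \<omega> * (indicator {0<..<1} (U \<omega>) * h (U \<omega>)))"
      using split by eventually_elim simp
  qed (simp_all add: S_def)
  have "(\<integral>\<omega>. indicator S \<omega> * G \<omega> * Y \<omega> \<partial>M) = (\<integral>\<omega>. f \<omega> * real_cond_exp M F3 Y \<omega> \<partial>M)"
    using F3.real_cond_exp_intg(2)[OF int_f f_F3 Y_M] by (simp add: f_def)
  also have "\<dots> = (\<integral>\<omega>. indicator S \<omega> * (G \<omega> * a \<omega>) \<partial>M)
      + (\<integral>\<omega>. indicator S \<omega> * (G \<omega> * b \<omega> * (indicator {0<..<1} (U \<omega>) * h (U \<omega>))) \<partial>M)"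
    using split int_a int_h F3.real_cond_exp_intg(1)[OF int_f f_F3 Y_M]
    by (subst integral_cong_AE[OF _ _ split]) (simp_all add: S_def)
  also have "(\<integral>\<omega>. indicator S \<omega> * (G \<omega> * b \<omega> * (indicator {0<..<1} (U \<omega>) * h (U \<omega>))) \<partial>M)
      = (\<integral>\<omega>. indicator S \<omega> * (G \<omega> * b \<omega> * lam h d (P \<omega>)) \<partial>M)"
    using integral_selection_h_eq_lam[OF sub _ indep _ _ P_range h, of "\<lambda>\<omega>. G \<omega> * b \<omega>"] int_h int_b
    unfolding S_def by (simp add: mult.assoc)
  finally show ?thesis
    using int_a int_b by simp
qed

section \<open>Population least squares under covariance restrictions\<close>

lemma integrable_mult_square_integrable:
  fixes f g :: "'a \<Rightarrow> real"
  assumes [measurable]: "f \<in> borel_measurable M" "g \<in> borel_measurable M"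
    and "integrable M (\<lambda>x. (f x)\<^sup>2)" "integrable M (\<lambda>x. (g x)\<^sup>2)"
  shows "integrable M (\<lambda>x. f x * g x)"
proof (rule Bochner_Integration.integrable_bound)
  show "integrable M (\<lambda>x. (f x)\<^sup>2 + (g x)\<^sup>2)" using assms by simp
  show "AE x in M. norm (f x * g x) \<le> norm ((f x)\<^sup>2 + (g x)\<^sup>2)"
  proof (intro AE_I2)
    fix x
    have "norm (f x * g x) \<le> 2 * \<bar>f x\<bar> * \<bar>g x\<bar>"
      by (simp add: abs_mult)
    also have "\<dots> \<le> norm ((f x)\<^sup>2 + (g x)\<^sup>2)"
      using sum_squares_bound[of "\<bar>f x\<bar>" "\<bar>g x\<bar>"] by simp
    finally show "norm (f x * g x) \<le> norm ((f x)\<^sup>2 + (g x)\<^sup>2)" .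
  qed
qed measurable

lemma (in prob_space) integrable_of_square_integrable:
  fixes f :: "'a \<Rightarrow> real"
  assumes "f \<in> borel_measurable M" "integrable M (\<lambda>x. (f x)\<^sup>2)"
  shows "integrable M f"
  using integrable_mult_square_integrable[OF assms(1) _ assms(2), of "\<lambda>_. 1"] by simp

lemma sum_reg_idx:
  fixes f :: "'l::finite reg_idx \<Rightarrow> 'a::comm_monoid_add"
  shows "(\<Sum>i\<in>UNIV. f i) = f RConst + f RLam + (\<Sum>k\<in>UNIV. f (RCov k))"
proof -
  have "(\<Sum>i\<in>UNIV. f i) = f RConst + (f RLam + (\<Sum>i\<in>range RCov. f i))"
    by (simp add: UNIV_reg_idx image_iff)
  also have "(\<Sum>i\<in>range RCov. f i) = (\<Sum>k\<in>UNIV. f (RCov k))"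
    by (rule sum.reindex[unfolded comp_def]) (simp add: inj_def)
  finally show ?thesis by (simp add: add.assoc)
qed

lemma regr_nth[simp]:
  "regr W L \<omega> $ RConst = 1" "regr W L \<omega> $ RCov k = W \<omega> $ k" "regr W L \<omega> $ RLam = L \<omega>"
  by (simp_all add: regr_def)

lemma matrix_inv_mult_cancel:
  fixes A :: "'a::field^'n^'n"
  assumes "invertible A"
  shows "matrix_inv A *v (A *v x) = x"
proof -
  have "matrix_inv A ** A = mat 1"
    using assms someI_ex[of "\<lambda>A'. A ** A' = mat 1 \<and> A' ** A = mat 1"]
    unfolding invertible_def matrix_inv_def by blast
  then show ?thesis by (simp add: matrix_vector_mul_assoc)
qed

lemma invertible_gram_block:
  fixes A :: "real^('l::finite reg_idx)^('l reg_idx)" and m :: "real^'l" and V :: "'l \<Rightarrow> 'l \<Rightarrow> real"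
  assumes A: "A $ RConst $ RConst = 1" "\<And>k. A $ RConst $ RCov k = m $ k" "\<And>k. A $ RCov k $ RConst = m $ k"
    "A $ RConst $ RLam = l" "A $ RLam $ RConst = l" "\<And>j k. A $ RCov j $ RCov k = V j k"
    "\<And>j. A $ RCov j $ RLam = m $ j * l" "\<And>j. A $ RLam $ RCov j = m $ j * l" "A $ RLam $ RLam = v"
    and cov_inv: "invertible (\<chi> j k. V j k - m $ j * m $ k)" and var: "v - l * l \<noteq> 0"
  shows "invertible A"
  unfolding invertible_left_inverse matrix_left_invertible_ker
proof (intro allI impI)
  fix x assume Ax: "A *v x = 0"
  define xw :: "real^'l" where "xw = (\<chi> k. x $ RCov k)"
  have row: "(\<Sum>j\<in>UNIV. A $ i $ j * x $ j) = 0" for i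
    using arg_cong[OF Ax, of "\<lambda>v. v $ i"] by (simp add: matrix_vector_mult_def)
  have r0: "x $ RConst + l * x $ RLam + (\<Sum>k\<in>UNIV. m $ k * xw $ k) = 0"
    using row[of RConst] by (simp add: sum_reg_idx xw_def A)
  have rj: "m $ j * x $ RConst + m $ j * l * x $ RLam + (\<Sum>k\<in>UNIV. V j k * xw $ k) = 0" for j
    using row[of "RCov j"] by (simp add: sum_reg_idx xw_def A)
  have rL: "l * x $ RConst + v * x $ RLam + l * (\<Sum>k\<in>UNIV. m $ k * xw $ k) = 0"
    using row[of RLam] by (simp add: sum_reg_idx xw_def A sum_distrib_left ac_simps)
  \<comment> \<open>Subtracting \<open>m\<close> times the first row from the covariate rows leaves the covariance matrix.\<close>
  have "((\<chi> j k. V j k - m $ j * m $ k) *v xw) $ j = 0" for j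
  proof -
    have "((\<chi> j k. V j k - m $ j * m $ k) *v xw) $ j
        = (\<Sum>k\<in>UNIV. V j k * xw $ k) - m $ j * (\<Sum>k\<in>UNIV. m $ k * xw $ k)"
      by (simp add: matrix_vector_mult_def sum_subtractf sum_distrib_left algebra_simps)
    also have "\<dots> = 0" using rj[of j] r0 by algebra
    finally show ?thesis .
  qed
  then have "(\<chi> j k. V j k - m $ j * m $ k) *v xw = 0" by (simp add: vec_eq_iff)
  then have xw: "xw = 0"
    using cov_inv unfolding invertible_left_inverse matrix_left_invertible_ker by blast
  have "x $ RConst + l * x $ RLam = 0" "l * x $ RConst + v * x $ RLam = 0" using r0 rL xw by simp_all
  then have "(v - l * l) * x $ RLam = 0" by algebra
  with var have "x $ RLam = 0" by simp
  with r0 xw have "x $ RConst = 0" by simp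
  with \<open>x $ RLam = 0\<close> xw show "x = 0"
    unfolding vec_eq_iff xw_def by (metis reg_idx.exhaust vec_lambda_beta zero_index)
qed

lemma cexp_one:
  assumes "S \<in> sets M" "measure M S \<noteq> 0"
  shows "cexp M S (\<lambda>_. 1) = 1"
  using assms sets.sets_into_space[OF assms(1)] by (simp add: cexp_def Int_absorb2)

lemma integrable_indicator_sum:
  fixes f :: "'i \<Rightarrow> 'a \<Rightarrow> real"
  assumes "\<And>i. i \<in> I \<Longrightarrow> integrable M (\<lambda>\<omega>. indicator S \<omega> * f i \<omega>)"
  shows "integrable M (\<lambda>\<omega>. indicator S \<omega> * (\<Sum>i\<in>I. c i * f i \<omega>))"
proof -
  have "(\<lambda>\<omega>. indicator S \<omega> * (\<Sum>i\<in>I. c i * f i \<omega>)) = (\<lambda>\<omega>. \<Sum>i\<in>I. c i * (indicator S \<omega> * f i \<omega>))"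
    by (simp add: sum_distrib_left mult.left_commute)
  then show ?thesis
    using assms by (simp add: Bochner_Integration.integrable_sum)
qed

lemma integrable_indicator_inner:
  fixes W :: "'a \<Rightarrow> real^'l::finite" and G :: "'a \<Rightarrow> real"
  assumes "\<And>k. integrable M (\<lambda>\<omega>. indicator S \<omega> * (G \<omega> * W \<omega> $ k))"
  shows "integrable M (\<lambda>\<omega>. indicator S \<omega> * (G \<omega> * (W \<omega> \<bullet> v)))"
proof -
  have "(\<lambda>\<omega>. indicator S \<omega> * (G \<omega> * (W \<omega> \<bullet> v))) = (\<lambda>\<omega>. indicator S \<omega> * (\<Sum>k\<in>UNIV. v $ k * (G \<omega> * W \<omega> $ k)))"
    by (simp add: inner_vec_def sum_distrib_left ac_simps)
  then show ?thesis using integrable_indicator_sum[OF assms] by simp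
qed

lemma cexp_sum:
  fixes f :: "'i \<Rightarrow> 'a \<Rightarrow> real"
  assumes "\<And>i. i \<in> I \<Longrightarrow> integrable M (\<lambda>\<omega>. indicator S \<omega> * f i \<omega>)"
  shows "cexp M S (\<lambda>\<omega>. \<Sum>i\<in>I. c i * f i \<omega>) = (\<Sum>i\<in>I. c i * cexp M S (f i))"
  using assms
  by (simp add: cexp_def sum_distrib_left mult.left_commute[of "indicator S _"] sum_divide_distrib)

lemma cexp_add:
  assumes "integrable M (\<lambda>\<omega>. indicator S \<omega> * f \<omega>)" "integrable M (\<lambda>\<omega>. indicator S \<omega> * g \<omega>)"
  shows "cexp M S (\<lambda>\<omega>. f \<omega> + g \<omega>) = cexp M S f + cexp M S g"
  using assms by (simp add: cexp_def distrib_left add_divide_distrib)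

lemma cexp_regr_third_moment:
  fixes W :: "'a \<Rightarrow> real^'l::finite" and L :: "'a \<Rightarrow> real"
  defines "R \<equiv> regr W L"
  assumes S: "S \<in> sets M" "measure M S \<noteq> 0"
    and cov_W_L: "\<And>k. ccov M S (\<lambda>\<omega>. W \<omega> $ k) L = 0"
    and cov_WW_L: "\<And>j k. ccov M S (\<lambda>\<omega>. W \<omega> $ j * W \<omega> $ k) L = 0"
    and cov_W_L2: "\<And>k. ccov M S (\<lambda>\<omega>. W \<omega> $ k) (\<lambda>\<omega>. (L \<omega>)\<^sup>2) = 0"
  shows "cexp M S (\<lambda>\<omega>. R \<omega> $ i * W \<omega> $ k * L \<omega>)
    = cexp M S (\<lambda>\<omega>. R \<omega> $ i * W \<omega> $ k) * cexp M S L
      + cexp M S (\<lambda>\<omega>. R \<omega> $ i * L \<omega>) * cexp M S (\<lambda>\<omega>. W \<omega> $ k)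
      - cexp M S (\<lambda>\<omega>. R \<omega> $ i) * cexp M S (\<lambda>\<omega>. W \<omega> $ k) * cexp M S L"
proof -
  have WL: "cexp M S (\<lambda>\<omega>. W \<omega> $ k * L \<omega>) = cexp M S (\<lambda>\<omega>. W \<omega> $ k) * cexp M S L" for k
    using cov_W_L[of k] by (simp add: ccov_def)
  then have LW: "cexp M S (\<lambda>\<omega>. L \<omega> * W \<omega> $ k) = cexp M S (\<lambda>\<omega>. W \<omega> $ k) * cexp M S L" for k
    by (simp add: mult.commute)
  have WWL: "cexp M S (\<lambda>\<omega>. W \<omega> $ j * W \<omega> $ k * L \<omega>) = cexp M S (\<lambda>\<omega>. W \<omega> $ j * W \<omega> $ k) * cexp M S L" for j k
    using cov_WW_L[of j k] by (simp add: ccov_def)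
  have LWL: "cexp M S (\<lambda>\<omega>. L \<omega> * W \<omega> $ k * L \<omega>) = cexp M S (\<lambda>\<omega>. W \<omega> $ k) * cexp M S (\<lambda>\<omega>. L \<omega> * L \<omega>)" for k
    using cov_W_L2[of k] by (simp add: ccov_def power2_eq_square ac_simps)
  show ?thesis
    by (cases i) (simp_all add: R_def cexp_one[OF S] WL LW WWL LWL)
qed

lemma invertible_gram_cov_restricted:
  fixes W :: "'a \<Rightarrow> real^'l::finite" and L :: "'a \<Rightarrow> real"
  defines "R \<equiv> regr W L"
  assumes S: "S \<in> sets M" "measure M S \<noteq> 0"
    and var_W: "invertible (\<chi> j k. ccov M S (\<lambda>\<omega>. W \<omega> $ j) (\<lambda>\<omega>. W \<omega> $ k))"
    and var_L: "ccov M S L L \<noteq> 0"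
    and cov_W_L: "\<And>k. ccov M S (\<lambda>\<omega>. W \<omega> $ k) L = 0"
  shows "invertible (\<chi> i j. cexp M S (\<lambda>\<omega>. R \<omega> $ i * R \<omega> $ j))"
proof (rule invertible_gram_block)
  show "invertible (\<chi> j k. (\<chi> i j. cexp M S (\<lambda>\<omega>. R \<omega> $ i * R \<omega> $ j)) $ RCov j $ RCov k
      - cvec M S W $ j * cvec M S W $ k)"
    using var_W by (simp add: ccov_def R_def cvec_def)
  show "(\<chi> i j. cexp M S (\<lambda>\<omega>. R \<omega> $ i * R \<omega> $ j)) $ RLam $ RLam - cexp M S L * cexp M S L \<noteq> 0"
    using var_L by (simp add: ccov_def R_def)
  show "(\<chi> i j. cexp M S (\<lambda>\<omega>. R \<omega> $ i * R \<omega> $ j)) $ RLam $ RCov k = cvec M S W $ k * cexp M S L" for k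
    using cov_W_L[of k] by (simp add: R_def ccov_def cvec_def mult.commute)
qed (use cov_W_L in \<open>simp_all add: R_def cexp_one[OF S] cvec_def ccov_def\<close>)

lemma ls_coef_cov_restricted:
  fixes M :: "'a measure" and W :: "'a \<Rightarrow> real^'l::finite" and L Y :: "'a \<Rightarrow> real"
    and mu rho :: real and tau eta :: "real^'l"
  defines "R \<equiv> regr W L"
  assumes S: "S \<in> sets M" "measure M S \<noteq> 0"
    and normal_eq: "\<And>i. cexp M S (\<lambda>\<omega>. R \<omega> $ i * Y \<omega>)
      = cexp M S (\<lambda>\<omega>. R \<omega> $ i * (mu + W \<omega> \<bullet> tau + (rho + W \<omega> \<bullet> eta) * L \<omega>))"
    and int_RR: "\<And>i j. integrable M (\<lambda>\<omega>. indicator S \<omega> * (R \<omega> $ i * R \<omega> $ j))"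
    and int_RWL: "\<And>i k. integrable M (\<lambda>\<omega>. indicator S \<omega> * (R \<omega> $ i * W \<omega> $ k * L \<omega>))"
    and var_W: "invertible (\<chi> j k. ccov M S (\<lambda>\<omega>. W \<omega> $ j) (\<lambda>\<omega>. W \<omega> $ k))"
    and var_L: "ccov M S L L \<noteq> 0"
    and cov_W_L: "\<And>k. ccov M S (\<lambda>\<omega>. W \<omega> $ k) L = 0"
    and cov_WW_L: "\<And>j k. ccov M S (\<lambda>\<omega>. W \<omega> $ j * W \<omega> $ k) L = 0"
    and cov_W_L2: "\<And>k. ccov M S (\<lambda>\<omega>. W \<omega> $ k) (\<lambda>\<omega>. (L \<omega>)\<^sup>2) = 0"
  shows "ls_coef M S W L Y = (\<chi> i. case i of RConst \<Rightarrow> mu - (cvec M S W \<bullet> eta) * cexp M S L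
      | RCov k \<Rightarrow> tau $ k + cexp M S L * eta $ k | RLam \<Rightarrow> rho + cvec M S W \<bullet> eta)"
    (is "_ = ?\<beta>")
proof -
  define m l where "m = cvec M S W" and "l = cexp M S L"
  define A where "A = (\<chi> i j. cexp M S (\<lambda>\<omega>. R \<omega> $ i * R \<omega> $ j))"
  define \<beta>0 :: "real^('l reg_idx)" where "\<beta>0 = (\<chi> i. case i of RConst \<Rightarrow> mu | RCov k \<Rightarrow> tau $ k | RLam \<Rightarrow> rho)"
  have expand: "R \<omega> $ i * (mu + W \<omega> \<bullet> tau + (rho + W \<omega> \<bullet> eta) * L \<omega>)
      = (\<Sum>j\<in>UNIV. \<beta>0 $ j * (R \<omega> $ i * R \<omega> $ j)) + (\<Sum>k\<in>UNIV. eta $ k * (R \<omega> $ i * W \<omega> $ k * L \<omega>))"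
    for \<omega> i
    by (simp add: sum_reg_idx \<beta>0_def R_def inner_vec_def sum_distrib_left sum_distrib_right algebra_simps)
  have third: "cexp M S (\<lambda>\<omega>. R \<omega> $ i * W \<omega> $ k * L \<omega>)
      = A $ i $ RCov k * l + A $ i $ RLam * m $ k - A $ i $ RConst * m $ k * l" for i k
    using cexp_regr_third_moment[OF S cov_W_L cov_WW_L cov_W_L2, of i k]
    by (simp add: A_def R_def m_def l_def cvec_def)
  have "cexp M S (\<lambda>\<omega>. R \<omega> $ i * Y \<omega>) = (A *v ?\<beta>) $ i" for i
  proof -
    have "cexp M S (\<lambda>\<omega>. R \<omega> $ i * Y \<omega>)
        = (\<Sum>j\<in>UNIV. \<beta>0 $ j * A $ i $ j) + (\<Sum>k\<in>UNIV. eta $ k * cexp M S (\<lambda>\<omega>. R \<omega> $ i * W \<omega> $ k * L \<omega>))"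
      unfolding normal_eq expand using int_RR int_RWL
      by (simp add: cexp_add integrable_indicator_sum cexp_sum A_def)
    also have "\<dots> = (\<Sum>j\<in>UNIV. \<beta>0 $ j * A $ i $ j)
        + (\<Sum>k\<in>UNIV. eta $ k * (A $ i $ RCov k * l + A $ i $ RLam * m $ k - A $ i $ RConst * m $ k * l))"
      by (simp only: third)
    also have "\<dots> = (A *v ?\<beta>) $ i"
      by (simp add: matrix_vector_mult_def sum_reg_idx \<beta>0_def inner_vec_def sum.distrib
          sum_subtractf sum_distrib_left sum_distrib_right algebra_simps flip: m_def l_def)
    finally show ?thesis .
  qed
  then have "(\<chi> i. cexp M S (\<lambda>\<omega>. R \<omega> $ i * Y \<omega>)) = A *v ?\<beta>"
    by (simp add: vec_eq_iff)
  with invertible_gram_cov_restricted[OF S var_W var_L cov_W_L] show ?thesis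
    unfolding ls_coef_def R_def[symmetric] A_def[symmetric] by (simp add: matrix_inv_mult_cancel)
qed

lemma (in prob_space) evec_eq_cvec_split:
  fixes W :: "'a \<Rightarrow> real^'l::finite"
  assumes A: "A \<in> events" "prob A \<noteq> 0" "prob (space M - A) \<noteq> 0"
    and W: "\<And>k. integrable M (\<lambda>\<omega>. W \<omega> $ k)"
  shows "evec M W = prob A *\<^sub>R cvec M A W + prob (space M - A) *\<^sub>R cvec M (space M - A) W"
proof -
  have int: "integrable M (\<lambda>\<omega>. indicator B \<omega> * W \<omega> $ k)" if "B \<in> events" for B k
    using integrable_real_mult_indicator[OF that W[of k]] by (simp add: mult.commute)
  have "(\<integral>\<omega>. W \<omega> $ k \<partial>M) = (\<integral>\<omega>. indicator A \<omega> * W \<omega> $ k + indicator (space M - A) \<omega> * W \<omega> $ k \<partial>M)" for k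
    by (intro Bochner_Integration.integral_cong) (auto split: split_indicator)
  also have "\<dots> k = (\<integral>\<omega>. indicator A \<omega> * W \<omega> $ k \<partial>M) + (\<integral>\<omega>. indicator (space M - A) \<omega> * W \<omega> $ k \<partial>M)" for k
    using A by (intro Bochner_Integration.integral_add int) auto
  finally show ?thesis
    using A by (simp add: evec_def cvec_def cexp_def vec_eq_iff)
qed

lemma (in prob_space) integral_affine_inner:
  fixes W :: "'a \<Rightarrow> real^'l::finite"
  assumes "\<And>k. integrable M (\<lambda>\<omega>. W \<omega> $ k)"
  shows "(\<integral>\<omega>. c + W \<omega> \<bullet> v \<partial>M) = c + evec M W \<bullet> v"
  using assms
  by (simp add: inner_vec_def evec_def Bochner_Integration.integral_add Bochner_Integration.integral_sum
      prob_space)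

section \<open>The selection model\<close>

locale selection_model = prob_space M
  for M :: "'o measure" +
  fixes Mz :: "'z measure" and Z :: "'o \<Rightarrow> 'z" and W :: "'o \<Rightarrow> real^'L::finite"
    and U P D Yobs :: "'o \<Rightarrow> real" and Y :: "nat \<Rightarrow> 'o \<Rightarrow> real" and h :: "real \<Rightarrow> real"
    and mu rho :: "nat \<Rightarrow> real" and tau eta :: "nat \<Rightarrow> real^'L"
  assumes Z_meas[measurable]: "Z \<in> measurable M Mz" and W_meas[measurable]: "W \<in> borel_measurable M"
    and U_meas[measurable]: "U \<in> borel_measurable M"
    and Y_meas: "\<forall>d\<in>{0,1}. Y d \<in> borel_measurable M"
    and U_unif: "\<forall>B\<in>sets borel. AE \<omega> in M.
       real_cond_exp M (sigma_gen M borel W) (indicator (U -` B \<inter> space M)) \<omega> = measure lborel (B \<inter> {0..1})"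
    and Z_U_indep: "cond_indep M (sigma_gen M borel W) Z Mz U borel"
    and P_meas[measurable]: "P \<in> borel_measurable (sigma_gen M (Mz \<Otimes>\<^sub>M borel) (\<lambda>\<omega>. (Z \<omega>, W \<omega>)))"
    and P_range: "AE \<omega> in M. 0 < P \<omega> \<and> P \<omega> < 1"
    and D_def: "\<forall>\<omega>\<in>space M. D \<omega> = (if U \<omega> \<le> P \<omega> then 1 else 0)"
    and Yobs_def: "\<forall>\<omega>\<in>space M. Yobs \<omega> = (1 - D \<omega>) * Y 0 \<omega> + D \<omega> * Y 1 \<omega>"
    and Y_ZWU: "\<forall>d\<in>{0,1}. AE \<omega> in M.
       real_cond_exp M (sigma_gen M (Mz \<Otimes>\<^sub>M (borel \<Otimes>\<^sub>M borel)) (\<lambda>\<omega>. (Z \<omega>, W \<omega>, U \<omega>))) (Y d) \<omega>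
       = mu d + W \<omega> \<bullet> tau d + (rho d + W \<omega> \<bullet> eta d) * h (U \<omega>)"
    and h_cont: "continuous_on {0<..<1} h"
begin

abbreviation "F_ZW \<equiv> sigma_gen M (Mz \<Otimes>\<^sub>M borel) (\<lambda>\<omega>. (Z \<omega>, W \<omega>))"
abbreviation "F_ZWU \<equiv> sigma_gen M (Mz \<Otimes>\<^sub>M (borel \<Otimes>\<^sub>M borel)) (\<lambda>\<omega>. (Z \<omega>, W \<omega>, U \<omega>))"
abbreviation event_D :: "nat \<Rightarrow> 'o set" where "event_D d \<equiv> {\<omega> \<in> space M. D \<omega> = real d}"
abbreviation control :: "nat \<Rightarrow> 'o \<Rightarrow> real" where "control d \<equiv> \<lambda>\<omega>. lam h d (P \<omega>)"
abbreviation regressors :: "nat \<Rightarrow> 'o \<Rightarrow> real^('L reg_idx)" where "regressors d \<equiv> regr W (control d)"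

lemma subalgebra_F_ZW: "subalgebra M F_ZW"
  by (rule subalgebra_sigma_gen) simp

lemma subalgebra_F_ZWU: "subalgebra M F_ZWU"
  by (rule subalgebra_sigma_gen) simp

lemma subalgebra_F_ZWU_F_ZW: "subalgebra F_ZWU F_ZW"
proof -
  have ZWU: "(\<lambda>\<omega>. (Z \<omega>, W \<omega>, U \<omega>)) \<in> measurable M (Mz \<Otimes>\<^sub>M (borel \<Otimes>\<^sub>M borel))"
    by simp
  have proj: "(\<lambda>x. (fst x, fst (snd x)))
      \<in> measurable (Mz \<Otimes>\<^sub>M (borel \<Otimes>\<^sub>M borel)) (Mz \<Otimes>\<^sub>M (borel :: (real^'L) measure))"
    by simp
  from subalgebra_sigma_gen_comp[OF ZWU proj] show ?thesis
    by (simp only: fst_conv snd_conv)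
qed

lemma W_F_ZW[measurable]: "W \<in> borel_measurable F_ZW"
proof -
  have "(\<lambda>\<omega>. (Z \<omega>, W \<omega>)) \<in> measurable F_ZW (Mz \<Otimes>\<^sub>M borel)"
    by (rule measurable_sigma_gen) simp
  from measurable_compose[OF this measurable_snd] show ?thesis
    by (simp only: snd_conv)
qed

lemma U_F_ZWU[measurable]: "U \<in> borel_measurable F_ZWU"
proof -
  have "(\<lambda>\<omega>. (Z \<omega>, W \<omega>, U \<omega>)) \<in> measurable F_ZWU (Mz \<Otimes>\<^sub>M (borel \<Otimes>\<^sub>M borel))"
    by (rule measurable_sigma_gen) simp
  from measurable_compose[OF measurable_compose[OF this measurable_snd] measurable_snd] show ?thesis
    by (simp only: snd_conv)
qed

lemma P_M[measurable]: "P \<in> borel_measurable M"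
  by (rule measurable_from_subalg[OF subalgebra_F_ZW P_meas])

lemma indep_uniform_U: "indep_uniform M F_ZW U"
  by (rule indep_uniform_sigma_gen_pair[OF Z_meas W_meas U_meas U_unif Z_U_indep])

lemma event_D_eq_selection:
  assumes "d \<in> {0, 1}"
  shows "event_D d = {\<omega> \<in> space M. U \<omega> \<in> selection_set d (P \<omega>)}"
proof -
  have "D \<omega> = real d \<longleftrightarrow> U \<omega> \<in> selection_set d (P \<omega>)" if "\<omega> \<in> space M" for \<omega>
    using assms D_def that by (auto simp: selection_set_def)
  then show ?thesis by blast
qed

lemma sets_event_D: "d \<in> {0, 1} \<Longrightarrow> event_D d \<in> events"
  by (subst event_D_eq_selection) simp_all

lemma event_D_0: "event_D 0 = space M - event_D 1"
  using D_def by auto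

lemma prob_event_D_0: "prob (event_D 0) = 1 - prob (event_D 1)"
  unfolding event_D_0 using prob_compl[OF sets_event_D[of 1]] by simp

lemma control_F_ZW: "control d \<in> borel_measurable F_ZW"
  by (rule measurable_compose[OF P_meas borel_measurable_lam])

lemma regressors_F_ZW: "(\<lambda>\<omega>. regressors d \<omega> $ i) \<in> borel_measurable F_ZW"
  by (cases i) (simp_all add: control_F_ZW measurable_compose[OF W_F_ZW borel_measurable_nth])

lemma cexp_event_D_outcome:
  assumes d: "d \<in> {0, 1}" and G_F: "G \<in> borel_measurable F_ZW"
    and int_Y: "integrable M (\<lambda>\<omega>. indicator (event_D d) \<omega> * G \<omega> * Y d \<omega>)"
    and int_G: "integrable M (\<lambda>\<omega>. indicator (event_D d) \<omega> * G \<omega>)"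
    and int_GW: "\<And>k. integrable M (\<lambda>\<omega>. indicator (event_D d) \<omega> * (G \<omega> * W \<omega> $ k))"
    and int_GL: "integrable M (\<lambda>\<omega>. indicator (event_D d) \<omega> * (G \<omega> * control d \<omega>))"
    and int_GWL: "\<And>k. integrable M (\<lambda>\<omega>. indicator (event_D d) \<omega> * (G \<omega> * control d \<omega> * W \<omega> $ k))"
  shows "cexp M (event_D d) (\<lambda>\<omega>. G \<omega> * Yobs \<omega>)
    = cexp M (event_D d) (\<lambda>\<omega>. G \<omega> * (mu d + W \<omega> \<bullet> tau d + (rho d + W \<omega> \<bullet> eta d) * control d \<omega>))"
proof -
  let ?S = "event_D d"
  have a_F: "(\<lambda>\<omega>. mu d + W \<omega> \<bullet> tau d) \<in> borel_measurable F_ZW"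
    and b_F: "(\<lambda>\<omega>. rho d + W \<omega> \<bullet> eta d) \<in> borel_measurable F_ZW"
    by simp_all
  have Y_M: "Y d \<in> borel_measurable M"
    using Y_meas d by blast
  have cond: "AE \<omega> in M. real_cond_exp M F_ZWU (Y d) \<omega>
      = (mu d + W \<omega> \<bullet> tau d) + (rho d + W \<omega> \<bullet> eta d) * h (U \<omega>)"
    using Y_ZWU d by auto
  have sel: "?S = {\<omega> \<in> space M. U \<omega> \<in> selection_set d (P \<omega>)}"
    by (rule event_D_eq_selection[OF d])
  have "integrable M (\<lambda>\<omega>. mu d * (indicator ?S \<omega> * G \<omega>) + indicator ?S \<omega> * (G \<omega> * (W \<omega> \<bullet> tau d)))"
    using int_G int_GW
    by (intro Bochner_Integration.integrable_add Bochner_Integration.integrable_mult_right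
        integrable_indicator_inner)
  then have int_a: "integrable M (\<lambda>\<omega>. indicator ?S \<omega> * (G \<omega> * (mu d + W \<omega> \<bullet> tau d)))"
    by (simp add: algebra_simps)
  have "integrable M (\<lambda>\<omega>. rho d * (indicator ?S \<omega> * (G \<omega> * control d \<omega>))
      + indicator ?S \<omega> * (G \<omega> * control d \<omega> * (W \<omega> \<bullet> eta d)))"
    using int_GL int_GWL
    by (intro Bochner_Integration.integrable_add Bochner_Integration.integrable_mult_right
        integrable_indicator_inner)
  then have int_b: "integrable M (\<lambda>\<omega>. indicator ?S \<omega> * (G \<omega> * (rho d + W \<omega> \<bullet> eta d) * control d \<omega>))"
    by (simp add: algebra_simps)
  have "(\<integral>\<omega>. indicator ?S \<omega> * G \<omega> * Y d \<omega> \<partial>M)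
      = (\<integral>\<omega>. indicator ?S \<omega> * (G \<omega> * (mu d + W \<omega> \<bullet> tau d))
           + indicator ?S \<omega> * (G \<omega> * (rho d + W \<omega> \<bullet> eta d) * control d \<omega>) \<partial>M)"
    unfolding sel
    by (rule integral_selection_outcome[OF subalgebra_F_ZW subalgebra_F_ZWU subalgebra_F_ZWU_F_ZW U_F_ZWU
        indep_uniform_U P_meas G_F a_F b_F Y_M P_range h_cont cond])
      (use int_Y int_a int_b in \<open>simp_all only: sel\<close>)
  moreover have "(\<integral>\<omega>. indicator ?S \<omega> * (G \<omega> * Yobs \<omega>) \<partial>M) = (\<integral>\<omega>. indicator ?S \<omega> * G \<omega> * Y d \<omega> \<partial>M)"
    using d Yobs_def by (intro Bochner_Integration.integral_cong) (auto simp: indicator_def)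
  ultimately show ?thesis
    unfolding cexp_def by (simp add: algebra_simps)
qed

end

locale cov_restricted_selection_model = selection_model +
  assumes Y_sq: "\<forall>d\<in>{0,1}. integrable M (\<lambda>\<omega>. (Y d \<omega>)\<^sup>2)"
    and W_sq: "\<forall>i. integrable M (\<lambda>\<omega>. (W \<omega> $ i)\<^sup>2)"
    and lam_sq: "\<forall>d\<in>{0,1}.
      integrable M (\<lambda>\<omega>. indicator {\<omega> \<in> space M. D \<omega> = real d} \<omega> * (lam h d (P \<omega>))\<^sup>2)"
    and WWlam_int: "\<forall>d\<in>{0,1}. \<forall>i j. integrable M
      (\<lambda>\<omega>. indicator {\<omega> \<in> space M. D \<omega> = real d} \<omega> * (W \<omega> $ i * W \<omega> $ j * lam h d (P \<omega>)))"
    and Wlam2_int: "\<forall>d\<in>{0,1}. \<forall>i. integrable M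
      (\<lambda>\<omega>. indicator {\<omega> \<in> space M. D \<omega> = real d} \<omega> * (W \<omega> $ i * (lam h d (P \<omega>))\<^sup>2))"
    and VarW_nonsing: "\<forall>d\<in>{0,1}.
      invertible (\<chi> i j. ccov M {\<omega> \<in> space M. D \<omega> = real d} (\<lambda>\<omega>. W \<omega> $ i) (\<lambda>\<omega>. W \<omega> $ j))"
    and Varlam_pos: "\<forall>d\<in>{0,1}.
      ccov M {\<omega> \<in> space M. D \<omega> = real d} (\<lambda>\<omega>. lam h d (P \<omega>)) (\<lambda>\<omega>. lam h d (P \<omega>)) > 0"
    and PD: "0 < prob {\<omega> \<in> space M. D \<omega> = 1} \<and> prob {\<omega> \<in> space M. D \<omega> = 1} < 1"
    and cov1: "\<forall>d\<in>{0,1}. \<forall>i.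
      ccov M {\<omega> \<in> space M. D \<omega> = real d} (\<lambda>\<omega>. W \<omega> $ i) (\<lambda>\<omega>. lam h d (P \<omega>)) = 0"
    and cov2: "\<forall>d\<in>{0,1}. \<forall>i j.
      ccov M {\<omega> \<in> space M. D \<omega> = real d} (\<lambda>\<omega>. W \<omega> $ i * W \<omega> $ j) (\<lambda>\<omega>. lam h d (P \<omega>)) = 0"
    and cov3: "\<forall>d\<in>{0,1}. \<forall>i.
      ccov M {\<omega> \<in> space M. D \<omega> = real d} (\<lambda>\<omega>. W \<omega> $ i) (\<lambda>\<omega>. (lam h d (P \<omega>))\<^sup>2) = 0"
begin

lemma W_nth_M: "(\<lambda>\<omega>. W \<omega> $ k) \<in> borel_measurable M"
  by (rule measurable_compose[OF W_meas borel_measurable_nth])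

lemma borel_measurable_indicator_regressors:
  "d \<in> {0, 1} \<Longrightarrow> (\<lambda>\<omega>. indicator (event_D d) \<omega> * regressors d \<omega> $ i) \<in> borel_measurable M"
  using measurable_from_subalg[OF subalgebra_F_ZW regressors_F_ZW] sets_event_D
  by (intro borel_measurable_times borel_measurable_indicator) auto

lemma square_integrable_indicator_regressors:
  assumes d: "d \<in> {0, 1}"
  shows "integrable M (\<lambda>\<omega>. (indicator (event_D d) \<omega> * regressors d \<omega> $ i)\<^sup>2)"
proof (cases i)
  case RConst
  then have "(\<lambda>\<omega>. (indicator (event_D d) \<omega> * regressors d \<omega> $ i)\<^sup>2) = indicator (event_D d)"
    by (simp add: fun_eq_iff indicator_def)
  then show ?thesis
    using sets_event_D[OF d] by (simp add: integrable_real_indicator less_top[symmetric])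
next
  case (RCov k)
  then have "(\<lambda>\<omega>. (indicator (event_D d) \<omega> * regressors d \<omega> $ i)\<^sup>2)
      = (\<lambda>\<omega>. (W \<omega> $ k)\<^sup>2 * indicator (event_D d) \<omega>)"
    by (auto simp: fun_eq_iff split: split_indicator)
  then show ?thesis
    using integrable_real_mult_indicator[OF sets_event_D[OF d] W_sq[rule_format, of k]] by simp
next
  case RLam
  then have "(\<lambda>\<omega>. (indicator (event_D d) \<omega> * regressors d \<omega> $ i)\<^sup>2)
      = (\<lambda>\<omega>. indicator (event_D d) \<omega> * (lam h d (P \<omega>))\<^sup>2)"
    by (auto simp: fun_eq_iff split: split_indicator)
  then show ?thesis using lam_sq[rule_format, OF d] by simp
qed

lemma integrable_indicator_regressors_mult:
  assumes d: "d \<in> {0, 1}" and [measurable]: "f \<in> borel_measurable M" and f_sq: "integrable M (\<lambda>\<omega>. (f \<omega>)\<^sup>2)"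
  shows "integrable M (\<lambda>\<omega>. indicator (event_D d) \<omega> * regressors d \<omega> $ i * f \<omega>)"
  by (rule integrable_mult_square_integrable[OF borel_measurable_indicator_regressors[OF d] _
        square_integrable_indicator_regressors[OF d] f_sq]) simp

lemma integrable_indicator_regressors_mult_regressors:
  assumes d: "d \<in> {0, 1}"
  shows "integrable M (\<lambda>\<omega>. indicator (event_D d) \<omega> * (regressors d \<omega> $ i * regressors d \<omega> $ j))"
proof -
  have "(\<lambda>\<omega>. indicator (event_D d) \<omega> * regressors d \<omega> $ i * (indicator (event_D d) \<omega> * regressors d \<omega> $ j))
      = (\<lambda>\<omega>. indicator (event_D d) \<omega> * (regressors d \<omega> $ i * regressors d \<omega> $ j))"
    by (auto simp: fun_eq_iff split: split_indicator)
  with integrable_indicator_regressors_mult[OF d borel_measurable_indicator_regressors[OF d]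
      square_integrable_indicator_regressors[OF d], of i j]
  show ?thesis by simp
qed

lemma integrable_indicator_regressors_W_control:
  assumes d: "d \<in> {0, 1}"
  shows "integrable M (\<lambda>\<omega>. indicator (event_D d) \<omega> * (regressors d \<omega> $ i * W \<omega> $ k * control d \<omega>))"
proof (cases i)
  case RConst
  then show ?thesis
    using integrable_indicator_regressors_mult[OF d W_nth_M W_sq[rule_format], of RLam k]
    by (simp add: ac_simps)
next
  case (RCov j)
  then show ?thesis using WWlam_int[rule_format, OF d] by simp
next
  case RLam
  then show ?thesis using Wlam2_int[rule_format, OF d] by (simp add: power2_eq_square ac_simps)
qed

lemma ls_coef_event_D:
  assumes d: "d \<in> {0, 1}"
  shows "ls_coef M (event_D d) W (control d) Yobs = (\<chi> i. case i of
      RConst \<Rightarrow> mu d - (cvec M (event_D d) W \<bullet> eta d) * cexp M (event_D d) (control d)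
    | RCov k \<Rightarrow> tau d $ k + cexp M (event_D d) (control d) * eta d $ k
    | RLam \<Rightarrow> rho d + cvec M (event_D d) W \<bullet> eta d)"
proof (rule ls_coef_cov_restricted)
  note int_RR = integrable_indicator_regressors_mult_regressors[OF d]
  show "cexp M (event_D d) (\<lambda>\<omega>. regressors d \<omega> $ i * Yobs \<omega>)
      = cexp M (event_D d) (\<lambda>\<omega>. regressors d \<omega> $ i
          * (mu d + W \<omega> \<bullet> tau d + (rho d + W \<omega> \<bullet> eta d) * control d \<omega>))" for i
  proof (rule cexp_event_D_outcome[OF d regressors_F_ZW])
    show "integrable M (\<lambda>\<omega>. indicator (event_D d) \<omega> * regressors d \<omega> $ i * Y d \<omega>)"
      using Y_meas Y_sq d by (intro integrable_indicator_regressors_mult) auto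
    show "integrable M (\<lambda>\<omega>. indicator (event_D d) \<omega> * (regressors d \<omega> $ i * control d \<omega> * W \<omega> $ k))" for k
      using integrable_indicator_regressors_W_control[OF d, of i k] by (simp add: ac_simps)
  qed (use int_RR[of i RConst] int_RR[of i "RCov _"] int_RR[of i RLam] in simp_all)
  show "measure M (event_D d) \<noteq> 0"
    using PD prob_event_D_0 d by auto
qed (use sets_event_D[OF d] integrable_indicator_regressors_mult_regressors[OF d]
    integrable_indicator_regressors_W_control[OF d] VarW_nonsing[rule_format, OF d]
    Varlam_pos[rule_format, OF d] cov1[rule_format, OF d] cov2[rule_format, OF d] cov3[rule_format, OF d]
    in simp_all)

lemma evec_W_eq:
  "evec M W = prob (event_D 1) *\<^sub>R cvec M (event_D 1) W + prob (event_D 0) *\<^sub>R cvec M (event_D 0) W"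
  using evec_eq_cvec_split[OF sets_event_D[of 1] _ _ integrable_of_square_integrable[OF W_nth_M]] W_sq PD
    prob_event_D_0
  unfolding event_D_0 by simp

lemma integral_slope:
  "(\<integral>\<omega>. (rho 1 + W \<omega> \<bullet> eta 1) - (rho 0 + W \<omega> \<bullet> eta 0) \<partial>M) = rho 1 - rho 0 + evec M W \<bullet> (eta 1 - eta 0)"
  using integral_affine_inner[OF integrable_of_square_integrable[OF W_nth_M], of "rho 1 - rho 0"
      "eta 1 - eta 0"] W_sq
  by (simp add: inner_diff_right algebra_simps)

end

theorem theorem4:
  fixes M :: "'o measure" and Mz :: "'z measure"
    and Y :: "nat \<Rightarrow> 'o \<Rightarrow> real" and Yobs D U P :: "'o \<Rightarrow> real"
    and Z :: "'o \<Rightarrow> 'z" and W :: "'o \<Rightarrow> real^'L"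
    and h :: "real \<Rightarrow> real"
    and mu rho :: "nat \<Rightarrow> real" and tau eta :: "nat \<Rightarrow> real^'L"
  defines "Ev \<equiv> \<lambda>d::nat. {\<omega> \<in> space M. D \<omega> = real d}"
    and "bt \<equiv> \<lambda>d::nat. ls_coef M {\<omega> \<in> space M. D \<omega> = real d} W (\<lambda>\<omega>. lam h d (P \<omega>)) Yobs"
  assumes prob: "prob_space M"
    (* measurability *)
    and Z_meas: "Z \<in> measurable M Mz" and W_meas: "W \<in> borel_measurable M"
    and U_meas: "U \<in> borel_measurable M"
    and Y_meas: "\<forall>d\<in>{0,1}. Y d \<in> borel_measurable M"
    (* U | W is uniform on [0,1] *)
    and U_unif: "\<forall>B\<in>sets borel. AE \<omega> in M.
         real_cond_exp M (sigma_gen M borel W) (indicator (U -` B \<inter> space M)) \<omega>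
         = measure lborel (B \<inter> {0..1})"
    (* Z independent of U given W *)
    and Z_U_indep: "cond_indep M (sigma_gen M borel W) Z Mz U borel"
    (* P = P(D = 1 | Z, W) *)
    and P_meas: "P \<in> borel_measurable (sigma_gen M (Mz \<Otimes>\<^sub>M borel) (\<lambda>\<omega>. (Z \<omega>, W \<omega>)))"
    and P_def: "AE \<omega> in M. P \<omega> = real_cond_exp M (sigma_gen M (Mz \<Otimes>\<^sub>M borel) (\<lambda>\<omega>. (Z \<omega>, W \<omega>)))
                     (indicator {\<omega> \<in> space M. D \<omega> = 1}) \<omega>"
    and P_range: "AE \<omega> in M. 0 < P \<omega> \<and> P \<omega> < 1"
    (* selection equation and observed outcome *)
    and D_def: "\<forall>\<omega>\<in>space M. D \<omega> = (if U \<omega> \<le> P \<omega> then 1 else 0)"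
    and Yobs_def: "\<forall>\<omega>\<in>space M. Yobs \<omega> = (1 - D \<omega>) * Y 0 \<omega> + D \<omega> * Y 1 \<omega>"
    (* E[Y_d | Z,W,U] = E[Y_d | W,U] = mu_d + W'tau_d + rho_d(W) h(U) *)
    and Y_ZWU: "\<forall>d\<in>{0,1}. AE \<omega> in M.
         real_cond_exp M (sigma_gen M (Mz \<Otimes>\<^sub>M (borel \<Otimes>\<^sub>M borel)) (\<lambda>\<omega>. (Z \<omega>, W \<omega>, U \<omega>))) (Y d) \<omega>
         = mu d + W \<omega> \<bullet> tau d + (rho d + W \<omega> \<bullet> eta d) * h (U \<omega>)"
    and Y_WU: "\<forall>d\<in>{0,1}. AE \<omega> in M.
         real_cond_exp M (sigma_gen M (borel \<Otimes>\<^sub>M borel) (\<lambda>\<omega>. (W \<omega>, U \<omega>))) (Y d) \<omega>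
         = mu d + W \<omega> \<bullet> tau d + (rho d + W \<omega> \<bullet> eta d) * h (U \<omega>)"
    (* h strictly increasing, continuous on (0,1), integrating to zero *)
    and h_mono: "strict_mono_on {0<..<1} h"
    and h_cont: "continuous_on {0<..<1} h"
    and h_int: "interval_lebesgue_integrable lborel 0 1 h"
    and h_zero: "(LBINT u=0..1. h u) = 0"
    (* finite second moments *)
    and Y_int: "\<forall>d\<in>{0,1}. integrable M (Y d) \<and> integrable M (\<lambda>\<omega>. (Y d \<omega>)\<^sup>2)"
    and W_int: "\<forall>i. integrable M (\<lambda>\<omega>. (W \<omega> $ i)\<^sup>2)"
    and lam_int: "\<forall>d\<in>{0,1}. integrable M (\<lambda>\<omega>. indicator (Ev d) \<omega> * (lam h d (P \<omega>))\<^sup>2)"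
    and WWlam_int: "\<forall>d\<in>{0,1}. \<forall>i j. integrable M
          (\<lambda>\<omega>. indicator (Ev d) \<omega> * (W \<omega> $ i * W \<omega> $ j * lam h d (P \<omega>)))"
    and Wlam2_int: "\<forall>d\<in>{0,1}. \<forall>i. integrable M
          (\<lambda>\<omega>. indicator (Ev d) \<omega> * (W \<omega> $ i * (lam h d (P \<omega>))\<^sup>2))"
    (* nondegeneracy *)
    and VarW_nonsing: "\<forall>d\<in>{0,1}.
          invertible (\<chi> i j. ccov M (Ev d) (\<lambda>\<omega>. W \<omega> $ i) (\<lambda>\<omega>. W \<omega> $ j))"
    and Varlam_pos: "\<forall>d\<in>{0,1}.
          ccov M (Ev d) (\<lambda>\<omega>. lam h d (P \<omega>)) (\<lambda>\<omega>. lam h d (P \<omega>)) > 0"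
    and PD: "0 < measure M (Ev 1) \<and> measure M (Ev 1) < 1"
    (* covariance restrictions of part (1) *)
    and cov1: "\<forall>d\<in>{0,1}. \<forall>i. ccov M (Ev d) (\<lambda>\<omega>. W \<omega> $ i) (\<lambda>\<omega>. lam h d (P \<omega>)) = 0"
    and cov2: "\<forall>d\<in>{0,1}. \<forall>i j.
          ccov M (Ev d) (\<lambda>\<omega>. W \<omega> $ i * W \<omega> $ j) (\<lambda>\<omega>. lam h d (P \<omega>)) = 0"
    and cov3: "\<forall>d\<in>{0,1}. \<forall>i.
          ccov M (Ev d) (\<lambda>\<omega>. W \<omega> $ i) (\<lambda>\<omega>. (lam h d (P \<omega>))\<^sup>2) = 0"
  shows
    "(ls_mu (bt 1) - ls_mu (bt 0) + evec M W \<bullet> (ls_tau (bt 1) - ls_tau (bt 0)))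
       - (mu 1 - mu 0 + evec M W \<bullet> (tau 1 - tau 0))
     = (evec M W - cvec M (Ev 1) W) \<bullet> eta 1 * cexp M (Ev 1) (\<lambda>\<omega>. lam h 1 (P \<omega>))
       - (evec M W - cvec M (Ev 0) W) \<bullet> eta 0 * cexp M (Ev 0) (\<lambda>\<omega>. lam h 0 (P \<omega>))
   \<and> (\<forall>w :: real^'L.
       (ls_mu (bt 1) - ls_mu (bt 0) + w \<bullet> (ls_tau (bt 1) - ls_tau (bt 0)))
         - (mu 1 - mu 0 + w \<bullet> (tau 1 - tau 0))
       = (w - cvec M (Ev 1) W) \<bullet> eta 1 * cexp M (Ev 1) (\<lambda>\<omega>. lam h 1 (P \<omega>))
         - (w - cvec M (Ev 0) W) \<bullet> eta 0 * cexp M (Ev 0) (\<lambda>\<omega>. lam h 0 (P \<omega>)))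
   \<and> (ls_rho (bt 1) - ls_rho (bt 0))
       - (\<integral>\<omega>. (rho 1 + W \<omega> \<bullet> eta 1) - (rho 0 + W \<omega> \<bullet> eta 0) \<partial>M)
     = (cvec M (Ev 1) W - cvec M (Ev 0) W)
         \<bullet> (measure M (Ev 0) *\<^sub>R eta 1 + measure M (Ev 1) *\<^sub>R eta 0)
   \<and> (cvec M (Ev 1) W = cvec M (Ev 0) W \<longrightarrow>
       ls_mu (bt 1) - ls_mu (bt 0) + evec M W \<bullet> (ls_tau (bt 1) - ls_tau (bt 0))
         = mu 1 - mu 0 + evec M W \<bullet> (tau 1 - tau 0)
       \<and> ls_rho (bt 1) - ls_rho (bt 0)
         = (\<integral>\<omega>. (rho 1 + W \<omega> \<bullet> eta 1) - (rho 0 + W \<omega> \<bullet> eta 0) \<partial>M))"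
proof -
  interpret cov_restricted_selection_model M Mz Z W U P D Yobs Y h mu rho tau eta
    by (intro cov_restricted_selection_model.intro selection_model.intro selection_model_axioms.intro
        cov_restricted_selection_model_axioms.intro prob)
      (fact Z_meas W_meas U_meas Y_meas U_unif Z_U_indep P_meas P_range D_def Yobs_def Y_ZWU h_cont W_int
        lam_int[unfolded Ev_def] WWlam_int[unfolded Ev_def] Wlam2_int[unfolded Ev_def]
        VarW_nonsing[unfolded Ev_def] Varlam_pos[unfolded Ev_def] cov1[unfolded Ev_def]
        cov2[unfolded Ev_def] cov3[unfolded Ev_def]
      | use Y_int PD in \<open>simp add: Ev_def\<close>)+
  have mu_eq: "ls_mu (bt d) = mu d - (cvec M (Ev d) W \<bullet> eta d) * cexp M (Ev d) (\<lambda>\<omega>. lam h d (P \<omega>))"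
    and tau_eq: "ls_tau (bt d) = tau d + cexp M (Ev d) (\<lambda>\<omega>. lam h d (P \<omega>)) *\<^sub>R eta d"
    and rho_eq: "ls_rho (bt d) = rho d + cvec M (Ev d) W \<bullet> eta d" if "d \<in> {0, 1}" for d
    using ls_coef_event_D[OF that] unfolding bt_def Ev_def
    by (simp_all add: ls_mu_def ls_tau_def ls_rho_def vec_eq_iff)
  have mean_W: "evec M W = measure M (Ev 1) *\<^sub>R cvec M (Ev 1) W + measure M (Ev 0) *\<^sub>R cvec M (Ev 0) W"
    and p_0: "measure M (Ev 0) = 1 - measure M (Ev 1)"
    using evec_W_eq prob_event_D_0 by (simp_all add: Ev_def)
  show ?thesis
    unfolding integral_slope mean_W
    by (simp add: mu_eq tau_eq rho_eq p_0 inner_diff_left inner_diff_right inner_add_left inner_add_right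
        algebra_simps)
qed

end
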